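(* Assume the setting below and that $|\lambda_{ij}|<1$ for all $i\neq j$. For each $i$, the probability that $C_i$ is a Condorcet winner among $n$ voters converges, as $n\to\infty$, to $$L\bigl((\delta_{ij})_{j\neq i};R_i\bigr),$$ and hence the probability $P(n,m)$ that some candidate is a Condorcet winner satisfies $$\lim_{n\to\infty}P(n,m)=\sum_{i=1}^m L\bigl(\delta_{i1},\dots,\delta_{i,i-1},\delta_{i,i+1},\dots,\delta_{im};R_i\bigr).$$ This holds for $n$ running through all positive integers (both odd and even).
   Context: There are $m\ge 2$ candidates $C_1,\dots,C_m$ and $K=m!$ strict rankings (linear orders) of them, indexed $r=1,\dots,K$. Each of $n$ voters independently chooses ranking $r$ with probability $p_r$ ($p_r\ge0$, $\sum_r p_r=1$); $N_r$ is the number of voters choosing ranking $r$, so $(N_1,\dots,N_K)$ is multinomial$(n;p_1,\dots,p_K)$. For $i\ne j$, let $a_{r,(i,j)}=1$ if ranking $r$ places $C_i$ above $C_j$ and $a_{r,(i,j)}=-1$ otherwise. $C_i$ beats $C_j$ by majority if $\sum_r a_{r,(i,j)}N_r\ge1$; $C_i$ is a Condorcet winner if it beats every $C_j$, $j\ne i$. Let $\lambda_{ij}=\sum_r a_{r,(i,j)}p_r$. For distinct $i,j,l$ let $a_{r,(i,j),l}=1$ if in ranking $r$ either $C_i$ is above both $C_j$ and $C_l$ or $C_i$ is below both, and $a_{r,(i,j),l}=-1$ otherwise; set $$R^{(i)}_{jl}=\frac{\sum_r a_{r,(i,j),l}p_r-\lambda_{ij}\lambda_{il}}{\sqrt{(1-\lambda_{ij}^2)(1-\lambda_{il}^2)}},\qquad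 R^{(i)}_{jj}=1,$$ and let $R_i$ be the $(m-1)\times(m-1)$ matrix $(R^{(i)}_{jl})_{j,l\ne i}$ (the correlation matrix of the vector $(X_{ij})_{j\neq i}$, where $X_{ij}=\pm1$ according as a single random voter ranks $C_i$ above/below $C_j$). Let $\delta_{ij}=-\infty$ if $\lambda_{ij}>0$, $+\infty$ if $\lambda_{ij}<0$, and $0$ if $\lambda_{ij}=0$. For a correlation matrix $R$ of size $d$ and $h_1,\dots,h_d\in\{-\infty,0,+\infty\}$, $L(h_1,\dots,h_d;R)=P(Z_1\ge h_1,\dots,Z_d\ge h_d)$ where $(Z_1,\dots,Z_d)\sim N(0,R)$; a coordinate with $h=-\infty$ imposes no constraint and any coordinate with $h=+\infty$ makes $L=0$. *)

theory Defs
  imports "HOL-Probability.Probability" "HOL-Combinatorics.Multiset_Permutations"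
begin

text \<open>Candidates are 0,...,m-1. A ranking is a list listing all candidates
  without repetition, best first; the set of rankings is
  permutations_of_set {0..<m} (it has m! elements).\<close>

definition rankings :: "nat \<Rightarrow> nat list set" where
  "rankings m = permutations_of_set {0..<m}"

definition above :: "nat list \<Rightarrow> nat \<Rightarrow> nat \<Rightarrow> bool" where
  "above r i j \<longleftrightarrow> (\<exists>a b. a < b \<and> b < length r \<and> r ! a = i \<and> r ! b = j)"

definition a_pair :: "nat list \<Rightarrow> nat \<Rightarrow> nat \<Rightarrow> real" where
  "a_pair r i j = (if above r i j then 1 else -1)"

definition a_triple :: "nat list \<Rightarrow> nat \<Rightarrow> nat \<Rightarrow> nat \<Rightarrow> real" where
  "a_triple r i j l =
     (if (above r i j \<and> above r i l) \<or> (above r j i \<and> above r l i) then 1 else -1)"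

definition lam :: "nat \<Rightarrow> (nat list \<Rightarrow> real) \<Rightarrow> nat \<Rightarrow> nat \<Rightarrow> real" where
  "lam m p i j = (\<Sum>r\<in>rankings m. a_pair r i j * p r)"

text \<open>Entries of the correlation matrix R_i, indexed by j,l in {0..<m} - {i}.\<close>
definition corrR :: "nat \<Rightarrow> (nat list \<Rightarrow> real) \<Rightarrow> nat \<Rightarrow> nat \<Rightarrow> nat \<Rightarrow> real" where
  "corrR m p i j l =
     (if j = l then 1
      else ((\<Sum>r\<in>rankings m. a_triple r i j l * p r) - lam m p i j * lam m p i l)
           / sqrt ((1 - (lam m p i j)\<^sup>2) * (1 - (lam m p i l)\<^sup>2)))"

definition delta :: "nat \<Rightarrow> (nat list \<Rightarrow> real) \<Rightarrow> nat \<Rightarrow> nat \<Rightarrow> ereal" where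
  "delta m p i j =
     (if lam m p i j > 0 then -\<infinity> else if lam m p i j < 0 then \<infinity> else 0)"

text \<open>Gaussian orthant probability L(h;R) = P(Z_j \<ge> h_j for all j in I) where
  Z ~ N(0,R) is indexed by the finite set I. Z is realised as Z = A W with W a
  vector of i.i.d. standard normals indexed by I and A any real matrix with
  A A^T = R (such A exists for a positive semidefinite R; the law of A W does
  not depend on the choice of A).\<close>
definition std_normal :: "real measure" where
  "std_normal = density lborel std_normal_density"

definition gauss_orthant :: "nat set \<Rightarrow> (nat \<Rightarrow> nat \<Rightarrow> real) \<Rightarrow> (nat \<Rightarrow> ereal) \<Rightarrow> real" where
  "gauss_orthant I R h =
     (let A = (SOME A :: nat \<Rightarrow> nat \<Rightarrow> real.
                 \<forall>j\<in>I. \<forall>l\<in>I. (\<Sum>k\<in>I. A j k * A l k) = R j l)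
      in measure (PiM I (\<lambda>_. std_normal))
           {w \<in> space (PiM I (\<lambda>_. std_normal)).
              \<forall>j\<in>I. ereal (\<Sum>k\<in>I. A j k * w k) \<ge> h j})"

text \<open>Profiles of n voters: lists of n rankings; the probability of a profile is
  the product of the p's. N_r = count_list vs r is the number of voters with
  ranking r, so (N_r) is multinomial(n; p).\<close>
definition profiles :: "nat \<Rightarrow> nat \<Rightarrow> nat list list set" where
  "profiles m n = {vs. length vs = n \<and> set vs \<subseteq> rankings m}"

definition profile_prob :: "(nat list \<Rightarrow> real) \<Rightarrow> nat list list \<Rightarrow> real" where
  "profile_prob p vs = (\<Prod>k<length vs. p (vs ! k))"

definition condorcet_winner :: "nat \<Rightarrow> nat list list \<Rightarrow> nat \<Rightarrow> bool" where
  "condorcet_winner m vs i \<longleftrightarrow>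
     (\<forall>j<m. j \<noteq> i \<longrightarrow>
        (\<Sum>r\<in>rankings m. a_pair r i j * real (count_list vs r)) \<ge> 1)"

definition prob_event :: "nat \<Rightarrow> (nat list \<Rightarrow> real) \<Rightarrow> nat \<Rightarrow> (nat list list \<Rightarrow> bool) \<Rightarrow> real" where
  "prob_event m p n E = (\<Sum>vs\<in>{vs\<in>profiles m n. E vs}. profile_prob p vs)"

end

theory Submission
  imports Defs
begin

section \<open>Profiles of independent voters\<close>

lemma finite_rankings: "finite (rankings m)"
  by (simp add: rankings_def)

lemma finite_profiles: "finite (profiles m n)"
proof -
  have "profiles m n = {vs. set vs \<subseteq> rankings m \<and> length vs = n}"
    by (auto simp: profiles_def)
  then show ?thesis
    using finite_lists_length_eq[OF finite_rankings] by simp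
qed

lemma profiles_0: "profiles m 0 = {[]}"
  by (auto simp: profiles_def)

lemma profiles_Suc: "profiles m (Suc n) = (\<lambda>(r, vs). r # vs) ` (rankings m \<times> profiles m n)"
proof (rule set_eqI, rule iffI)
  fix x assume "x \<in> profiles m (Suc n)"
  then obtain r vs where "x = r # vs" "r \<in> rankings m" "vs \<in> profiles m n"
    by (cases x) (auto simp: profiles_def)
  then show "x \<in> (\<lambda>(r, vs). r # vs) ` (rankings m \<times> profiles m n)"
    by force
qed (auto simp: profiles_def)

lemma sum_profiles_Suc:
  "(\<Sum>vs\<in>profiles m (Suc n). F vs) = (\<Sum>r\<in>rankings m. \<Sum>vs\<in>profiles m n. F (r # vs))"
proof -
  have "inj_on (\<lambda>(r, vs). r # vs) (rankings m \<times> profiles m n)"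
    by (auto simp: inj_on_def)
  then show ?thesis
    unfolding profiles_Suc by (simp add: sum.reindex sum.cartesian_product split_def)
qed

lemma profile_prob_Nil [simp]: "profile_prob p [] = 1"
  by (simp add: profile_prob_def)

lemma profile_prob_Cons [simp]: "profile_prob p (r # vs) = p r * profile_prob p vs"
  unfolding profile_prob_def length_Cons prod.lessThan_Suc_shift by simp

definition profile_expectation ::
    "nat \<Rightarrow> (nat list \<Rightarrow> real) \<Rightarrow> nat \<Rightarrow> (nat list list \<Rightarrow> 'a::real_normed_field) \<Rightarrow> 'a" where
  "profile_expectation m p n f = (\<Sum>vs\<in>profiles m n. of_real (profile_prob p vs) * f vs)"

lemma profile_expectation_0: "profile_expectation m p 0 f = f []"
  by (simp add: profile_expectation_def profiles_0)

lemma profile_expectation_Suc: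
  "profile_expectation m p (Suc n) f =
     (\<Sum>r\<in>rankings m. of_real (p r) * profile_expectation m p n (\<lambda>vs. f (r # vs)))"
  by (simp add: profile_expectation_def sum_profiles_Suc sum_distrib_left mult_ac)

lemma profile_expectation_multiplicative:
  assumes "\<And>r vs. r \<in> rankings m \<Longrightarrow> f (r # vs) = g r * f vs"
  shows "profile_expectation m p n f = (\<Sum>r\<in>rankings m. of_real (p r) * g r) ^ n * f []"
proof (induction n)
  case 0
  then show ?case by (simp add: profile_expectation_0)
next
  case (Suc n)
  have "profile_expectation m p n (\<lambda>vs. f (r # vs)) = g r * profile_expectation m p n f"
    if "r \<in> rankings m" for r
    using that by (simp add: profile_expectation_def assms sum_distrib_left mult_ac)
  then have "profile_expectation m p (Suc n) f =
      (\<Sum>r\<in>rankings m. of_real (p r) * g r) * profile_expectation m p n f"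
    by (simp add: profile_expectation_Suc sum_distrib_right mult.assoc cong: sum.cong)
  then show ?case
    by (simp add: Suc mult.assoc)
qed

lemma prob_event_eq_expectation:
  "prob_event m p n P = profile_expectation m p n (\<lambda>vs. of_bool (P vs))"
  unfolding prob_event_def profile_expectation_def
  by (simp add: sum.inter_filter[OF finite_profiles] of_bool_def if_distrib cong: if_cong)

locale voter_distribution =
  fixes m :: nat and p :: "nat list \<Rightarrow> real"
  assumes p_nonneg: "\<forall>r\<in>rankings m. p r \<ge> 0"
    and p_sum: "(\<Sum>r\<in>rankings m. p r) = 1"
begin

abbreviation expect :: "nat \<Rightarrow> (nat list list \<Rightarrow> 'a::real_normed_field) \<Rightarrow> 'a" where
  "expect \<equiv> profile_expectation m p"

lemma profile_prob_nonneg: "vs \<in> profiles m n \<Longrightarrow> profile_prob p vs \<ge> 0"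
  using p_nonneg unfolding profile_prob_def profiles_def
  by (intro prod_nonneg) (auto simp: subset_iff)

lemma expect_const [simp]: "expect n (\<lambda>_. c) = c"
proof -
  have "(\<Sum>r\<in>rankings m. of_real (p r) * 1) = (1 :: 'a)"
    using p_sum by (simp flip: of_real_sum)
  then show ?thesis
    using profile_expectation_multiplicative[of m "\<lambda>_. c" "\<lambda>_. 1" p n] by simp
qed

lemma expect_add: "expect n (\<lambda>vs. f vs + g vs) = expect n f + expect n g"
  by (simp add: profile_expectation_def distrib_left sum.distrib)

lemma expect_diff: "expect n (\<lambda>vs. f vs - g vs) = expect n f - expect n g"
  by (simp add: profile_expectation_def right_diff_distrib sum_subtractf)

lemma expect_scale: "expect n (\<lambda>vs. c * f vs) = c * expect n f"
  by (simp add: profile_expectation_def sum_distrib_left mult_ac)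

lemma expect_sum: "expect n (\<lambda>vs. \<Sum>j\<in>J. f j vs) = (\<Sum>j\<in>J. expect n (f j))"
  by (simp add: profile_expectation_def sum_distrib_left sum.swap[of _ J])

lemma expect_of_real: "expect n (\<lambda>vs. of_real (f vs)) = of_real (expect n f)"
  by (simp add: profile_expectation_def)

lemma expect_mono:
  fixes f g :: "nat list list \<Rightarrow> real"
  assumes "\<And>vs. vs \<in> profiles m n \<Longrightarrow> f vs \<le> g vs"
  shows "expect n f \<le> expect n g"
  unfolding profile_expectation_def
  by (intro sum_mono mult_left_mono assms) (auto intro: profile_prob_nonneg)

lemma expect_nonneg:
  fixes f :: "nat list list \<Rightarrow> real"
  assumes "\<And>vs. vs \<in> profiles m n \<Longrightarrow> 0 \<le> f vs"
  shows "0 \<le> expect n f"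
  using expect_mono[of n "\<lambda>_. 0" f] assms by simp

lemma expect_abs_diff_le:
  fixes f g b :: "nat list list \<Rightarrow> real"
  assumes "\<And>vs. vs \<in> profiles m n \<Longrightarrow> \<bar>f vs - g vs\<bar> \<le> b vs"
  shows "\<bar>expect n f - expect n g\<bar> \<le> expect n b"
proof -
  have "expect n (\<lambda>vs. f vs - g vs) \<le> expect n b" "expect n (\<lambda>vs. g vs - f vs) \<le> expect n b"
    using assms by (auto intro!: expect_mono simp: abs_le_iff)
  then show ?thesis by (simp add: expect_diff abs_le_iff)
qed

lemma expect_sum_list:
  "expect n (\<lambda>vs. \<Sum>v\<leftarrow>vs. g v) = real n * (\<Sum>r\<in>rankings m. p r * g r)"
proof (induction n)
  case 0
  then show ?case by (simp add: profile_expectation_0)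
next
  case (Suc n)
  have "expect (Suc n) (\<lambda>vs. \<Sum>v\<leftarrow>vs. g v) = (\<Sum>r\<in>rankings m. p r * (g r + expect n (\<lambda>vs. \<Sum>v\<leftarrow>vs. g v)))"
    by (simp add: profile_expectation_Suc expect_add)
  also have "\<dots> = real (Suc n) * (\<Sum>r\<in>rankings m. p r * g r)"
    by (simp add: Suc distrib_left sum.distrib flip: sum_distrib_right)
       (simp add: p_sum algebra_simps)
  finally show ?case .
qed

lemma expect_sum_list_variance:
  fixes g :: "nat list \<Rightarrow> real"
  defines "\<mu> \<equiv> (\<Sum>r\<in>rankings m. p r * g r)"
  shows "expect n (\<lambda>vs. ((\<Sum>v\<leftarrow>vs. g v) - real n * \<mu>)\<^sup>2) = real n * (\<Sum>r\<in>rankings m. p r * (g r - \<mu>)\<^sup>2)"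
proof (induction n)
  case 0
  then show ?case by (simp add: profile_expectation_0)
next
  case (Suc n)
  have centered: "expect n (\<lambda>vs. (\<Sum>v\<leftarrow>vs. g v) - real n * \<mu>) = 0"
    by (simp add: expect_diff expect_sum_list \<mu>_def)
  have "((\<Sum>v\<leftarrow>r # vs. g v) - real (Suc n) * \<mu>)\<^sup>2 = (g r - \<mu>)\<^sup>2
      + 2 * (g r - \<mu>) * ((\<Sum>v\<leftarrow>vs. g v) - real n * \<mu>) + ((\<Sum>v\<leftarrow>vs. g v) - real n * \<mu>)\<^sup>2"
    for r vs by (simp add: power2_eq_square algebra_simps)
  then have "expect (Suc n) (\<lambda>vs. ((\<Sum>v\<leftarrow>vs. g v) - real (Suc n) * \<mu>)\<^sup>2)
      = (\<Sum>r\<in>rankings m. p r * ((g r - \<mu>)\<^sup>2 + real n * (\<Sum>r\<in>rankings m. p r * (g r - \<mu>)\<^sup>2)))"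
    by (simp only: profile_expectation_Suc expect_add expect_scale expect_const centered Suc) simp
  also have "\<dots> = real (Suc n) * (\<Sum>r\<in>rankings m. p r * (g r - \<mu>)\<^sup>2)"
    by (simp add: distrib_left sum.distrib flip: sum_distrib_right) (simp add: p_sum algebra_simps)
  finally show ?case .
qed

lemma expect_chebyshev:
  fixes g :: "nat list \<Rightarrow> real"
  defines "\<mu> \<equiv> (\<Sum>r\<in>rankings m. p r * g r)"
  assumes "a > 0"
  shows "expect n (\<lambda>vs. of_bool (a \<le> \<bar>(\<Sum>v\<leftarrow>vs. g v) - real n * \<mu>\<bar>))
           \<le> real n * (\<Sum>r\<in>rankings m. p r * (g r - \<mu>)\<^sup>2) / a\<^sup>2"
proof -
  have "of_bool (a \<le> \<bar>x\<bar>) \<le> x\<^sup>2 / a\<^sup>2" for x :: real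
  proof (cases "a \<le> \<bar>x\<bar>")
    case True
    then have "a\<^sup>2 \<le> x\<^sup>2"
      using \<open>a > 0\<close> by (metis abs_le_square_iff abs_of_pos)
    then show ?thesis using True \<open>a > 0\<close> by simp
  qed simp
  then have "expect n (\<lambda>vs. of_bool (a \<le> \<bar>(\<Sum>v\<leftarrow>vs. g v) - real n * \<mu>\<bar>))
      \<le> expect n (\<lambda>vs. (1 / a\<^sup>2) * ((\<Sum>v\<leftarrow>vs. g v) - real n * \<mu>)\<^sup>2)"
    by (intro expect_mono) simp
  then show ?thesis
    by (simp only: expect_scale expect_sum_list_variance \<mu>_def) simp
qed

lemma expect_weak_law:
  fixes g :: "nat list \<Rightarrow> real"
  defines "\<mu> \<equiv> (\<Sum>r\<in>rankings m. p r * g r)"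
  assumes "\<epsilon> > 0"
  shows "(\<lambda>n. expect n (\<lambda>vs. of_bool (real n * \<epsilon> \<le> \<bar>(\<Sum>v\<leftarrow>vs. g v) - real n * \<mu>\<bar>) :: real))
           \<longlonglongrightarrow> 0"
proof (rule Lim_null_comparison)
  define V where "V = (\<Sum>r\<in>rankings m. p r * (g r - \<mu>)\<^sup>2)"
  show "(\<lambda>n. V / \<epsilon>\<^sup>2 / real n) \<longlonglongrightarrow> 0"
    by (rule lim_const_over_n)
  show "\<forall>\<^sub>F n in sequentially.
      norm (expect n (\<lambda>vs. of_bool (real n * \<epsilon> \<le> \<bar>(\<Sum>v\<leftarrow>vs. g v) - real n * \<mu>\<bar>) :: real))
        \<le> V / \<epsilon>\<^sup>2 / real n"
    using eventually_gt_at_top[of 0]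
  proof eventually_elim
    case (elim n)
    have "0 \<le> expect n (\<lambda>vs. of_bool (real n * \<epsilon> \<le> \<bar>(\<Sum>v\<leftarrow>vs. g v) - real n * \<mu>\<bar>) :: real)"
      by (rule expect_nonneg) simp
    moreover have "expect n (\<lambda>vs. of_bool (real n * \<epsilon> \<le> \<bar>(\<Sum>v\<leftarrow>vs. g v) - real n * \<mu>\<bar>))
        \<le> real n * V / (real n * \<epsilon>)\<^sup>2"
      unfolding V_def \<mu>_def using elim \<open>\<epsilon> > 0\<close> by (intro expect_chebyshev) simp
    ultimately show ?case
      using elim by (simp add: power2_eq_square field_simps)
  qed
qed

lemma expect_iexp_sum_list:
  "expect n (\<lambda>vs. iexp (t * (\<Sum>v\<leftarrow>vs. y v))) = (\<Sum>r\<in>rankings m. of_real (p r) * iexp (t * y r)) ^ n"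
  by (subst profile_expectation_multiplicative[where g = "\<lambda>r. iexp (t * y r)"])
     (simp_all add: distrib_left exp_add)

lemma char_second_order_approx:
  assumes centered: "(\<Sum>r\<in>rankings m. p r * y r) = 0"
  shows "norm ((\<Sum>r\<in>rankings m. of_real (p r) * iexp (h * y r))
               - of_real (1 - h\<^sup>2 / 2 * (\<Sum>r\<in>rankings m. p r * (y r)\<^sup>2)))
         \<le> \<bar>h\<bar> ^ 3 * (\<Sum>r\<in>rankings m. p r * \<bar>y r\<bar> ^ 3) / 6"
proof -
  define T where "T x = (\<Sum>k\<le>2. (\<i> * x) ^ k / fact k)" for x :: real
  have T: "T x = 1 + \<i> * x - of_real (x\<^sup>2 / 2)" for x
    by (simp add: T_def eval_nat_numeral power2_eq_square field_simps)
  have "(\<Sum>r\<in>rankings m. of_real (p r) * T (h * y r))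
      = of_real (\<Sum>r\<in>rankings m. p r) + \<i> * h * of_real (\<Sum>r\<in>rankings m. p r * y r)
        - of_real (h\<^sup>2 / 2 * (\<Sum>r\<in>rankings m. p r * (y r)\<^sup>2))"
    by (simp add: T sum.distrib sum_subtractf sum_distrib_left power_mult_distrib algebra_simps)
  then have second_order: "(\<Sum>r\<in>rankings m. of_real (p r) * T (h * y r))
      = of_real (1 - h\<^sup>2 / 2 * (\<Sum>r\<in>rankings m. p r * (y r)\<^sup>2))"
    by (simp add: p_sum centered)
  have diff: "(\<Sum>r\<in>rankings m. of_real (p r) * iexp (h * y r))
        - of_real (1 - h\<^sup>2 / 2 * (\<Sum>r\<in>rankings m. p r * (y r)\<^sup>2))
      = (\<Sum>r\<in>rankings m. of_real (p r) * (iexp (h * y r) - T (h * y r)))"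
    unfolding second_order[symmetric] by (simp add: right_diff_distrib sum_subtractf)
  have "norm ((\<Sum>r\<in>rankings m. of_real (p r) * iexp (h * y r))
               - of_real (1 - h\<^sup>2 / 2 * (\<Sum>r\<in>rankings m. p r * (y r)\<^sup>2)))
      \<le> (\<Sum>r\<in>rankings m. norm (of_real (p r) * (iexp (h * y r) - T (h * y r))))"
    unfolding diff by (rule norm_sum)
  also have "\<dots> \<le> (\<Sum>r\<in>rankings m. p r * (\<bar>h * y r\<bar> ^ 3 / 6))"
  proof (intro sum_mono)
    fix r assume "r \<in> rankings m"
    then have "p r \<ge> 0" using p_nonneg by blast
    moreover have "norm (iexp (h * y r) - T (h * y r)) \<le> \<bar>h * y r\<bar> ^ 3 / 6"
      using iexp_approx1[of "h * y r" 2] by (simp add: T_def eval_nat_numeral)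
    ultimately have "p r * norm (iexp (h * y r) - T (h * y r)) \<le> p r * (\<bar>h * y r\<bar> ^ 3 / 6)"
      by (rule mult_left_mono[rotated])
    then show "norm (of_real (p r) * (iexp (h * y r) - T (h * y r))) \<le> p r * (\<bar>h * y r\<bar> ^ 3 / 6)"
      using \<open>p r \<ge> 0\<close> by (simp add: norm_mult)
  qed
  also have "\<dots> = \<bar>h\<bar> ^ 3 * (\<Sum>r\<in>rankings m. p r * \<bar>y r\<bar> ^ 3) / 6"
    by (simp add: sum_distrib_left sum_divide_distrib abs_mult power_mult_distrib mult_ac)
  finally show ?thesis .
qed

lemma char_sum_list_tendsto:
  assumes centered: "(\<Sum>r\<in>rankings m. p r * y r) = 0"
  defines "\<sigma>2 \<equiv> (\<Sum>r\<in>rankings m. p r * (y r)\<^sup>2)"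
  shows "(\<lambda>n. expect n (\<lambda>vs. iexp ((\<Sum>v\<leftarrow>vs. y v) / sqrt (real n)))) \<longlonglongrightarrow> of_real (exp (- \<sigma>2 / 2))"
proof -
  define \<phi> where "\<phi> n = (\<Sum>r\<in>rankings m. of_real (p r) * iexp (y r / sqrt (real n)))" for n
  define C where "C = (\<Sum>r\<in>rankings m. p r * \<bar>y r\<bar> ^ 3) / 6"
  have expect_eq: "expect n (\<lambda>vs. iexp ((\<Sum>v\<leftarrow>vs. y v) / sqrt (real n))) = \<phi> n ^ n" for n
    using expect_iexp_sum_list[of n "1 / sqrt (real n)" y] by (simp add: \<phi>_def)
  have "\<forall>\<^sub>F n in sequentially. norm (\<phi> n ^ n - of_real ((1 + (- \<sigma>2 / 2) / real n) ^ n)) \<le> C / sqrt (real n)"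
    using eventually_ge_at_top[of "max 1 (nat \<lceil>\<sigma>2\<rceil>)"]
  proof eventually_elim
    case (elim n)
    then have n: "real n > 0" "real n \<ge> \<sigma>2" by auto
    have "\<sigma>2 \<ge> 0" unfolding \<sigma>2_def using p_nonneg by (intro sum_nonneg) auto
    then have "\<bar>1 + (- \<sigma>2 / 2) / real n\<bar> \<le> 1"
      using n by (simp add: abs_le_iff field_simps)
    then have "norm (of_real (1 + (- \<sigma>2 / 2) / real n) :: complex) \<le> 1"
      by (simp only: norm_of_real)
    moreover have "norm (\<phi> n) \<le> 1"
    proof -
      have "norm (\<phi> n) \<le> (\<Sum>r\<in>rankings m. p r)"
        unfolding \<phi>_def using p_nonneg by (auto intro!: sum_norm_le simp: norm_mult)
      then show ?thesis using p_sum by simp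
    qed
    ultimately have "norm (\<phi> n ^ n - of_real (1 + (- \<sigma>2 / 2) / real n) ^ n)
        \<le> real n * norm (\<phi> n - of_real (1 + (- \<sigma>2 / 2) / real n))"
      by (intro norm_power_diff)
    also have "\<dots> \<le> real n * (C * (1 / sqrt (real n)) ^ 3)"
      using char_second_order_approx[OF centered, of "1 / sqrt (real n)"] n
      by (intro mult_left_mono) (simp_all add: \<phi>_def \<sigma>2_def C_def power_divide field_simps)
    also have "\<dots> = C / sqrt (real n)"
      using n by (simp add: power3_eq_cube field_simps)
    finally show ?case by simp
  qed
  moreover have "(\<lambda>n. C / sqrt (real n)) \<longlonglongrightarrow> 0"
    by (intro tendsto_divide_0[OF tendsto_const] filterlim_at_top_imp_at_infinity
        filterlim_compose[OF sqrt_at_top filterlim_real_sequentially])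
  ultimately have "(\<lambda>n. \<phi> n ^ n - of_real ((1 + (- \<sigma>2 / 2) / real n) ^ n)) \<longlonglongrightarrow> 0"
    by (rule Lim_null_comparison)
  moreover have "(\<lambda>n. of_real ((1 + (- \<sigma>2 / 2) / real n) ^ n) :: complex) \<longlonglongrightarrow> of_real (exp (- \<sigma>2 / 2))"
    by (intro tendsto_of_real tendsto_exp_limit_sequentially)
  ultimately have "(\<lambda>n. \<phi> n ^ n) \<longlonglongrightarrow> of_real (exp (- \<sigma>2 / 2))"
    by (rule Lim_transform[rotated])
  then show ?thesis by (simp only: expect_eq)
qed
end

section \<open>Factorising Gram matrices\<close>

definition wdot :: "'x set \<Rightarrow> ('x \<Rightarrow> real) \<Rightarrow> ('x \<Rightarrow> real) \<Rightarrow> ('x \<Rightarrow> real) \<Rightarrow> real" where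
  "wdot X w u v = (\<Sum>x\<in>X. w x * u x * v x)"

lemma wdot_commute: "wdot X w u v = wdot X w v u"
  unfolding wdot_def by (simp add: mult_ac)

lemma wdot_diff_sum_left:
  "finite K \<Longrightarrow> wdot X w (\<lambda>x. f x - (\<Sum>k\<in>K. c k * g k x)) y = wdot X w f y - (\<Sum>k\<in>K. c k * wdot X w (g k) y)"
  unfolding wdot_def
  by (simp add: algebra_simps sum_subtractf sum_distrib_left sum_distrib_right sum.swap[of _ K])

lemma wdot_divide_left: "wdot X w (\<lambda>x. u x / c) v = wdot X w u v / c"
  unfolding wdot_def by (simp add: sum_divide_distrib)

lemma wdot_divide_right: "wdot X w u (\<lambda>x. v x / c) = wdot X w u v / c"
  unfolding wdot_def by (simp add: sum_divide_distrib)

lemma wdot_self_nonneg: "\<forall>x\<in>X. w x \<ge> 0 \<Longrightarrow> wdot X w u u \<ge> 0"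
  unfolding wdot_def by (auto intro!: sum_nonneg simp: mult.assoc)

lemma wdot_self_eq_0_imp:
  assumes w: "\<forall>x\<in>X. w x \<ge> 0" and X: "finite X" and null: "wdot X w u u = 0"
  shows "wdot X w u v = 0"
proof -
  have "\<forall>x\<in>X. w x * (u x * u x) = 0"
    using null w X unfolding wdot_def
    by (subst sum_nonneg_eq_0_iff[symmetric]) (auto simp: mult.assoc)
  then have "\<forall>x\<in>X. w x * u x = 0"
    by auto
  then show ?thesis
    unfolding wdot_def by (auto intro!: sum.neutral)
qed

definition semi_orthonormal :: "'x set \<Rightarrow> ('x \<Rightarrow> real) \<Rightarrow> 'k set \<Rightarrow> ('k \<Rightarrow> 'x \<Rightarrow> real) \<Rightarrow> bool" where
  "semi_orthonormal X w K e \<longleftrightarrow>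
     (\<forall>k\<in>K. \<forall>k'\<in>K. k \<noteq> k' \<longrightarrow> wdot X w (e k) (e k') = 0) \<and> (\<forall>k\<in>K. wdot X w (e k) (e k) \<in> {0, 1})"

definition weakly_spanned :: "'x set \<Rightarrow> ('x \<Rightarrow> real) \<Rightarrow> 'k set \<Rightarrow> ('k \<Rightarrow> 'x \<Rightarrow> real) \<Rightarrow> ('x \<Rightarrow> real) \<Rightarrow> bool" where
  "weakly_spanned X w K e b \<longleftrightarrow>
     (\<forall>y. wdot X w b y = (\<Sum>k\<in>K. wdot X w b (e k) * wdot X w (e k) y))"

lemma gram_schmidt_step:
  assumes w: "\<forall>x\<in>X. w x \<ge> 0" and X: "finite X" and K: "finite K"
    and e: "semi_orthonormal X w K e"
  shows "\<exists>e0. (\<forall>k\<in>K. wdot X w (e k) e0 = 0) \<and> wdot X w e0 e0 \<in> {0, 1} \<and>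
           (\<forall>y. wdot X w b y = (\<Sum>k\<in>K. wdot X w b (e k) * wdot X w (e k) y) + wdot X w b e0 * wdot X w e0 y)"
proof -
  define v where "v x = b x - (\<Sum>k\<in>K. wdot X w b (e k) * e k x)" for x
  have v: "wdot X w v y = wdot X w b y - (\<Sum>k\<in>K. wdot X w b (e k) * wdot X w (e k) y)" for y
    unfolding v_def by (rule wdot_diff_sum_left[OF K])
  have v_orth: "wdot X w (e k) v = 0" if "k \<in> K" for k
  proof -
    have "\<forall>k'\<in>K - {k}. wdot X w (e k') (e k) = 0"
      using e that unfolding semi_orthonormal_def by blast
    then have "(\<Sum>k'\<in>K. wdot X w b (e k') * wdot X w (e k') (e k)) = wdot X w b (e k) * wdot X w (e k) (e k)"
      using that K by (simp add: sum.remove[of _ k])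
    then have "wdot X w (e k) v = wdot X w b (e k) - wdot X w b (e k) * wdot X w (e k) (e k)"
      by (simp add: wdot_commute[of X w "e k" v] v)
    moreover have "wdot X w b (e k) = 0" if "wdot X w (e k) (e k) = 0"
      using wdot_self_eq_0_imp[OF w X that] wdot_commute by metis
    ultimately show ?thesis
      using e that by (auto simp: semi_orthonormal_def)
  qed
  have bv: "wdot X w b v = wdot X w v v"
    using v[of v] v_orth by simp
  show ?thesis
  proof (cases "wdot X w v v = 0")
    case True
    have null: "wdot X w v y = 0" for y
      by (rule wdot_self_eq_0_imp[OF w X True])
    show ?thesis
    proof (rule exI[of _ v], intro conjI allI ballI)
      show "wdot X w (e k) v = 0" if "k \<in> K" for k
        using v_orth that .
      show "wdot X w v v \<in> {0, 1}"
        using True by simp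
      show "wdot X w b y = (\<Sum>k\<in>K. wdot X w b (e k) * wdot X w (e k) y) + wdot X w b v * wdot X w v y" for y
        using v[of y] unfolding null by simp
    qed
  next
    case False
    define s where "s = sqrt (wdot X w v v)"
    have s: "s > 0" "s * s = wdot X w v v"
      using False wdot_self_nonneg[OF w, of v] by (auto simp: s_def)
    have expansion: "wdot X w b (\<lambda>x. v x / s) * wdot X w (\<lambda>x. v x / s) y = wdot X w v y" for y
      using s(1) by (simp add: wdot_divide_left wdot_divide_right bv flip: s(2))
    show ?thesis
    proof (rule exI[of _ "\<lambda>x. v x / s"], intro conjI allI ballI)
      show "wdot X w (e k) (\<lambda>x. v x / s) = 0" if "k \<in> K" for k
        using v_orth that by (simp add: wdot_divide_right)
      show "wdot X w (\<lambda>x. v x / s) (\<lambda>x. v x / s) \<in> {0, 1}"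
        using s(1) by (simp add: wdot_divide_left wdot_divide_right flip: s(2))
      show "wdot X w b y = (\<Sum>k\<in>K. wdot X w b (e k) * wdot X w (e k) y)
          + wdot X w b (\<lambda>x. v x / s) * wdot X w (\<lambda>x. v x / s) y" for y
        using v[of y] unfolding expansion by simp
    qed
  qed
qed

lemma gram_schmidt:
  assumes w: "\<forall>x\<in>X. w x \<ge> 0" and X: "finite X" and I: "finite I"
  shows "\<exists>e. semi_orthonormal X w I e \<and> (\<forall>j\<in>I. weakly_spanned X w I e (b j))"
  using I
proof (induction I rule: finite_induct)
  case empty
  then show ?case
    by (auto simp: semi_orthonormal_def)
next
  case (insert j0 I)
  obtain e where e: "semi_orthonormal X w I e" and spanned: "\<forall>j\<in>I. weakly_spanned X w I e (b j)"
    using insert.IH by blast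
  obtain e0 where e0_orth: "\<forall>k\<in>I. wdot X w (e k) e0 = 0" and e0_norm: "wdot X w e0 e0 \<in> {0, 1}"
    and b0: "\<forall>y. wdot X w (b j0) y = (\<Sum>k\<in>I. wdot X w (b j0) (e k) * wdot X w (e k) y) + wdot X w (b j0) e0 * wdot X w e0 y"
    using gram_schmidt_step[OF w X insert.hyps(1) e] by blast
  define e' where "e' = e(j0 := e0)"
  have sum_insert: "(\<Sum>k\<in>insert j0 I. f (e' k)) = f e0 + (\<Sum>k\<in>I. f (e k))" for f :: "('a \<Rightarrow> real) \<Rightarrow> real"
  proof -
    have "(\<Sum>k\<in>I. f (e' k)) = (\<Sum>k\<in>I. f (e k))"
      using insert.hyps(2) by (intro sum.cong) (auto simp: e'_def)
    then show ?thesis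
      using insert.hyps by (simp add: e'_def)
  qed
  have "semi_orthonormal X w (insert j0 I) e'"
    using e e0_orth e0_norm insert.hyps(2)
    unfolding semi_orthonormal_def e'_def by (metis fun_upd_other fun_upd_same insert_iff wdot_commute)
  moreover have "weakly_spanned X w (insert j0 I) e' (b j)" if "j \<in> insert j0 I" for j
    unfolding weakly_spanned_def
  proof
    fix y
    have "(\<Sum>k\<in>insert j0 I. wdot X w (b j) (e' k) * wdot X w (e' k) y)
        = wdot X w (b j) e0 * wdot X w e0 y + (\<Sum>k\<in>I. wdot X w (b j) (e k) * wdot X w (e k) y)"
      by (rule sum_insert)
    also have "\<dots> = wdot X w (b j) y"
    proof (cases "j = j0")
      case True
      then show ?thesis
        using b0 by (metis add.commute)
    next
      case False
      then have span_j: "wdot X w (b j) z = (\<Sum>k\<in>I. wdot X w (b j) (e k) * wdot X w (e k) z)" for z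
        using that spanned unfolding weakly_spanned_def by blast
      have "wdot X w (b j) e0 = 0"
        unfolding span_j[of e0] using e0_orth by simp
      then show ?thesis
        using span_j[of y] by simp
    qed
    finally show "wdot X w (b j) y = (\<Sum>k\<in>insert j0 I. wdot X w (b j) (e' k) * wdot X w (e' k) y)"
      by (rule sym)
  qed
  ultimately show ?case
    by blast
qed

lemma gram_factorization:
  assumes "\<forall>x\<in>X. w x \<ge> 0" "finite X" "finite I"
  shows "\<exists>A. \<forall>j\<in>I. \<forall>l\<in>I. (\<Sum>k\<in>I. A j k * A l k) = wdot X w (b j) (b l)"
proof -
  obtain e where spanned: "\<forall>j\<in>I. weakly_spanned X w I e (b j)"
    using gram_schmidt[OF assms] by blast
  have "(\<Sum>k\<in>I. wdot X w (b j) (e k) * wdot X w (b l) (e k)) = wdot X w (b j) (b l)" if "j \<in> I" for j l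
  proof -
    have "(\<Sum>k\<in>I. wdot X w (b j) (e k) * wdot X w (b l) (e k)) = (\<Sum>k\<in>I. wdot X w (b j) (e k) * wdot X w (e k) (b l))"
      by (simp add: wdot_commute[of X w "b l"])
    also have "\<dots> = wdot X w (b j) (b l)"
      using spanned that unfolding weakly_spanned_def by simp
    finally show ?thesis .
  qed
  then show ?thesis
    by (intro exI[of _ "\<lambda>j k. wdot X w (b j) (e k)"]) blast
qed

section \<open>Standard normal vectors\<close>

abbreviation std_normal_vec :: "'i set \<Rightarrow> ('i \<Rightarrow> real) measure" where
  "std_normal_vec I \<equiv> PiM I (\<lambda>_. std_normal)"

lemma prob_space_std_normal: "prob_space std_normal"
  unfolding std_normal_def by (rule prob_space_normal_density) simp

lemma real_distribution_std_normal: "real_distribution std_normal"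
  unfolding std_normal_def by (rule real_dist_normal_dist)

lemma prob_space_std_normal_vec: "prob_space (std_normal_vec I)"
  by (rule prob_space_PiM) (rule prob_space_std_normal)

lemma sets_std_normal [simp, measurable_cong]: "sets std_normal = sets borel"
  by (simp add: std_normal_def)

lemma space_std_normal [simp]: "space std_normal = UNIV"
  by (simp add: std_normal_def)

lemma char_std_normal: "char std_normal t = of_real (exp (- (t\<^sup>2) / 2))"
  unfolding std_normal_def by (simp add: char_std_normal_distribution)

lemma measurable_linear_form [measurable]:
  "(\<lambda>w. \<Sum>k\<in>I. c k * w k) \<in> borel_measurable (std_normal_vec I)"
  by measurable

lemma integral_iexp_linear_form:
  assumes "finite I"
  shows "(\<integral>w. iexp (\<Sum>k\<in>I. c k * w k) \<partial>std_normal_vec I) = of_real (exp (- (\<Sum>k\<in>I. (c k)\<^sup>2) / 2))"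
proof -
  interpret product_prob_space "\<lambda>_. std_normal" I
    by (simp add: product_prob_space_def product_prob_space_axioms_def product_sigma_finite_def
        prob_space_std_normal prob_space_imp_sigma_finite)
  have "iexp (\<Sum>k\<in>I. c k * w k) = (\<Prod>k\<in>I. (\<lambda>x. iexp (c k * x)) (w k))" for w
    using assms by (simp add: sum_distrib_left exp_sum)
  then have "(\<integral>w. iexp (\<Sum>k\<in>I. c k * w k) \<partial>std_normal_vec I)
      = (\<integral>w. (\<Prod>k\<in>I. (\<lambda>x. iexp (c k * x)) (w k)) \<partial>std_normal_vec I)"
    by presburger
  also have "\<dots> = (\<Prod>k\<in>I. \<integral>x. iexp (c k * x) \<partial>std_normal)"
    using assms prob_space.integrable_iexp[OF prob_space_std_normal] by (intro product_integral_prod) auto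
  also have "\<dots> = (\<Prod>k\<in>I. of_real (exp (- ((c k)\<^sup>2) / 2)))"
    using char_std_normal by (simp add: char_def)
  also have "\<dots> = of_real (exp (\<Sum>k\<in>I. - ((c k)\<^sup>2) / 2))"
    using assms by (simp add: exp_sum flip: of_real_prod)
  also have "(\<Sum>k\<in>I. - ((c k)\<^sup>2) / 2) = - (\<Sum>k\<in>I. (c k)\<^sup>2) / 2"
    by (simp add: sum_negf sum_divide_distrib)
  finally show ?thesis .
qed

lemma distr_unit_linear_form:
  assumes "finite I" and unit: "(\<Sum>k\<in>I. (c k)\<^sup>2) = 1"
  shows "distr (std_normal_vec I) borel (\<lambda>w. \<Sum>k\<in>I. c k * w k) = std_normal"
proof (rule Levy_uniqueness)
  interpret prob_space "std_normal_vec I"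
    by (rule prob_space_std_normal_vec)
  show "real_distribution (distr (std_normal_vec I) borel (\<lambda>w. \<Sum>k\<in>I. c k * w k))"
    by (rule real_distribution_distr) simp
  show "real_distribution std_normal"
    by (rule real_distribution_std_normal)
  show "char (distr (std_normal_vec I) borel (\<lambda>w. \<Sum>k\<in>I. c k * w k)) = char std_normal"
  proof
    fix t
    have "char (distr (std_normal_vec I) borel (\<lambda>w. \<Sum>k\<in>I. c k * w k)) t
        = (\<integral>w. iexp (\<Sum>k\<in>I. (t * c k) * w k) \<partial>std_normal_vec I)"
      unfolding char_def by (subst integral_distr) (auto simp: sum_distrib_left mult.assoc)
    also have "\<dots> = of_real (exp (- (\<Sum>k\<in>I. (t * c k)\<^sup>2) / 2))"
      by (rule integral_iexp_linear_form[OF assms(1)])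
    finally show "char (distr (std_normal_vec I) borel (\<lambda>w. \<Sum>k\<in>I. c k * w k)) t = char std_normal t"
      using unit by (simp add: char_std_normal power_mult_distrib flip: sum_distrib_left)
  qed
qed

lemma std_normal_abs_le:
  assumes "d \<ge> 0"
  shows "measure std_normal {x. \<bar>x\<bar> \<le> d} \<le> d"
proof -
  have density_le: "std_normal_density x \<le> 1 / 2" for x
  proof -
    have "(2::real) \<le> sqrt (2 * pi)"
      using pi_gt3 by (simp add: real_le_rsqrt)
    then have "1 / sqrt (2 * pi) \<le> 1 / 2"
      by (simp add: divide_le_cancel)
    moreover have "std_normal_density x \<le> 1 / sqrt (2 * pi)"
      unfolding std_normal_density_def by (simp add: divide_le_cancel)
    ultimately show ?thesis by linarith
  qed
  have "emeasure std_normal {x. \<bar>x\<bar> \<le> d} = (\<integral>\<^sup>+ x. ennreal (std_normal_density x) * indicator {-d..d} x \<partial>lborel)"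
    unfolding std_normal_def by (subst emeasure_density) (auto intro!: nn_integral_cong split: split_indicator)
  also have "\<dots> \<le> (\<integral>\<^sup>+ x. ennreal (1 / 2) * indicator {-d..d} x \<partial>lborel)"
    using ennreal_leI[OF density_le] by (intro nn_integral_mono) (simp split: split_indicator)
  also have "\<dots> = ennreal (1 / 2) * ennreal (2 * d)"
    using assms by (simp add: nn_integral_cmult)
  also have "\<dots> = ennreal d"
    using assms by (subst ennreal_mult[symmetric]) auto
  finally show ?thesis
    using assms unfolding measure_def by (simp add: enn2real_leI)
qed

lemma std_normal_abs_ge:
  assumes "M > 0"
  shows "measure std_normal {x. M \<le> \<bar>x\<bar>} \<le> 1 / M\<^sup>2"
proof -
  interpret prob_space std_normal
    by (rule prob_space_std_normal)
  have "integrable std_normal (\<lambda>x. x\<^sup>2)"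
    unfolding std_normal_def using integrable_std_normal_distribution_moment[of 2] by simp
  then have "prob {x \<in> space std_normal. M \<le> \<bar>x - expectation (\<lambda>x. x)\<bar>} \<le> variance (\<lambda>x. x) / M\<^sup>2"
    using assms by (intro Chebyshev_inequality) auto
  moreover have "expectation (\<lambda>x. x) = 0"
    unfolding std_normal_def using integral_std_normal_distribution_moment_odd[of 1] by simp
  moreover have "expectation (\<lambda>x. x\<^sup>2) = 1"
    unfolding std_normal_def using std_normal_distribution_even_moments(1)[of 1] by simp
  ultimately show ?thesis
    by simp
qed

section \<open>Trigonometric polynomials\<close>

definition exp_char :: "'i set \<Rightarrow> ('i \<Rightarrow> real) \<Rightarrow> ('i \<Rightarrow> real) \<Rightarrow> complex" where
  "exp_char J \<theta> z = iexp (\<Sum>j\<in>J. \<theta> j * z j)"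

definition trig_sum :: "'i set \<Rightarrow> (complex \<times> ('i \<Rightarrow> real)) list \<Rightarrow> ('i \<Rightarrow> real) \<Rightarrow> complex" where
  "trig_sum J L z = (\<Sum>(c, \<theta>)\<leftarrow>L. c * exp_char J \<theta> z)"

definition trig_poly :: "'i set \<Rightarrow> (('i \<Rightarrow> real) \<Rightarrow> complex) \<Rightarrow> bool" where
  "trig_poly J F \<longleftrightarrow> (\<exists>L. \<forall>z. F z = trig_sum J L z)"

lemma exp_char_mult: "exp_char J \<theta> z * exp_char J \<eta> z = exp_char J (\<lambda>j. \<theta> j + \<eta> j) z"
  unfolding exp_char_def by (simp add: algebra_simps sum.distrib flip: exp_add)

lemma trig_sum_Nil [simp]: "trig_sum J [] z = 0"
  by (simp add: trig_sum_def)

lemma trig_sum_Cons [simp]: "trig_sum J ((c, \<theta>) # L) z = c * exp_char J \<theta> z + trig_sum J L z"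
  by (simp add: trig_sum_def)

lemma trig_sum_append: "trig_sum J (L1 @ L2) z = trig_sum J L1 z + trig_sum J L2 z"
  by (simp add: trig_sum_def)

lemma trig_sum_mult_exp_char:
  "c * exp_char J \<theta> z * trig_sum J L z = trig_sum J (map (\<lambda>(d, \<eta>). (c * d, \<lambda>j. \<theta> j + \<eta> j)) L) z"
proof (induction L)
  case (Cons a L)
  obtain d \<eta> where "a = (d, \<eta>)"
    by fastforce
  moreover have "c * exp_char J \<theta> z * (d * exp_char J \<eta> z) = c * d * exp_char J (\<lambda>j. \<theta> j + \<eta> j) z"
    by (simp add: mult_ac flip: exp_char_mult)
  ultimately show ?case
    using Cons by (simp add: distrib_left)
qed simp

lemma trig_sum_mult:
  "trig_sum J L1 z * trig_sum J L2 z =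
     trig_sum J (concat (map (\<lambda>(c, \<theta>). map (\<lambda>(d, \<eta>). (c * d, \<lambda>j. \<theta> j + \<eta> j)) L2) L1)) z"
proof (induction L1)
  case (Cons a L1)
  obtain c \<theta> where "a = (c, \<theta>)"
    by fastforce
  then show ?case
    using Cons by (simp add: distrib_right trig_sum_append trig_sum_mult_exp_char)
qed simp

lemma trig_poly_const: "trig_poly J (\<lambda>z. c)"
  unfolding trig_poly_def by (rule exI[of _ "[(c, \<lambda>_. 0)]"]) (simp add: exp_char_def)

lemma trig_poly_add:
  assumes "trig_poly J F" "trig_poly J G"
  shows "trig_poly J (\<lambda>z. F z + G z)"
proof -
  obtain L1 L2 where "\<forall>z. F z = trig_sum J L1 z" "\<forall>z. G z = trig_sum J L2 z"
    using assms unfolding trig_poly_def by blast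
  then show ?thesis
    unfolding trig_poly_def by (intro exI[of _ "L1 @ L2"]) (simp add: trig_sum_append)
qed

lemma trig_poly_mult:
  assumes "trig_poly J F" "trig_poly J G"
  shows "trig_poly J (\<lambda>z. F z * G z)"
proof -
  obtain L1 L2 where "\<forall>z. F z = trig_sum J L1 z" "\<forall>z. G z = trig_sum J L2 z"
    using assms unfolding trig_poly_def by blast
  then have "\<forall>z. F z * G z =
      trig_sum J (concat (map (\<lambda>(c, \<theta>). map (\<lambda>(d, \<eta>). (c * d, \<lambda>j. \<theta> j + \<eta> j)) L2) L1)) z"
    by (simp add: trig_sum_mult)
  then show ?thesis
    unfolding trig_poly_def by blast
qed

lemma trig_poly_diff:
  assumes "trig_poly J F" "trig_poly J G"
  shows "trig_poly J (\<lambda>z. F z - G z)"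
proof -
  have "trig_poly J (\<lambda>z. F z + (- 1) * G z)"
    using assms by (intro trig_poly_add trig_poly_mult trig_poly_const)
  then show ?thesis
    by simp
qed

lemma trig_poly_sum: "(\<And>s. s \<in> S \<Longrightarrow> trig_poly J (F s)) \<Longrightarrow> trig_poly J (\<lambda>z. \<Sum>s\<in>S. F s z)"
  by (induction S rule: infinite_finite_induct) (auto intro: trig_poly_const trig_poly_add)

lemma trig_poly_prod: "(\<And>s. s \<in> S \<Longrightarrow> trig_poly J (F s)) \<Longrightarrow> trig_poly J (\<lambda>z. \<Prod>s\<in>S. F s z)"
  by (induction S rule: infinite_finite_induct) (auto intro: trig_poly_const trig_poly_mult)

lemma trig_poly_power: "trig_poly J F \<Longrightarrow> trig_poly J (\<lambda>z. F z ^ n)"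
  by (induction n) (auto intro: trig_poly_const trig_poly_mult)

lemma trig_poly_sin_coordinate:
  assumes "j \<in> J" "finite J"
  shows "trig_poly J (\<lambda>z. of_real (sin (a * z j)))"
proof -
  have "(\<Sum>k\<in>J. (if k = j then b else 0) * z k) = (\<Sum>k\<in>J. if k = j then b * z j else 0)" for b :: real and z
    by (rule sum.cong) auto
  then have exp_char_coordinate: "exp_char J (\<lambda>k. if k = j then b else 0) z = iexp (b * z j)" for b z
    using assms by (simp add: exp_char_def)
  have "of_real (sin (a * z j)) = (iexp (a * z j) - iexp (- a * z j)) / (2 * \<i>)" for z
    by (simp add: sin_exp_eq flip: sin_of_real)
  then have "of_real (sin (a * z j))
      = trig_sum J [(1 / (2 * \<i>), \<lambda>k. if k = j then a else 0), (- 1 / (2 * \<i>), \<lambda>k. if k = j then - a else 0)] z" for z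
    by (simp only: trig_sum_Cons trig_sum_Nil exp_char_coordinate) (simp add: algebra_simps diff_divide_distrib)
  then show ?thesis
    unfolding trig_poly_def by blast
qed

lemma trig_poly_Bernstein_sin:
  assumes "j \<in> J" "finite J"
  shows "trig_poly J (\<lambda>z. of_real (\<Sum>k\<le>N. b k * Bernstein N k ((sin (a * z j) + 1) / 2)))"
proof -
  have "trig_poly J (\<lambda>z. (1 / 2) * (of_real (sin (a * z j)) + 1))"
    by (intro trig_poly_mult trig_poly_add trig_poly_const trig_poly_sin_coordinate assms)
  then have "trig_poly J (\<lambda>z. of_real ((sin (a * z j) + 1) / 2))"
    by (simp add: add_divide_distrib)
  then have "trig_poly J (\<lambda>z. \<Sum>k\<le>N. of_real (b k) * of_real (real (N choose k))
      * of_real ((sin (a * z j) + 1) / 2) ^ k * (1 - of_real ((sin (a * z j) + 1) / 2)) ^ (N - k))"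
    by (intro trig_poly_sum trig_poly_mult trig_poly_power trig_poly_diff trig_poly_const)
  then show ?thesis
    by (simp add: Bernstein_def mult.assoc)
qed

lemma sin_affine_bounds: "0 \<le> (sin x + 1) / 2 \<and> (sin x + 1) / 2 \<le> (1 :: real)"
proof -
  have "0 \<le> sin x + 1" "sin x + 1 \<le> 2"
    using sin_le_one[of x] sin_ge_minus_one[of x] by linarith+
  then show ?thesis
    by simp
qed

lemma uniform_approx_Bernstein_sin:
  fixes g :: "real \<Rightarrow> real"
  assumes g_cont: "continuous_on UNIV g" and g01: "\<And>t. 0 \<le> g t \<and> g t \<le> 1"
    and "M > 0" "\<eta> > 0"
  shows "\<exists>a N b. (\<forall>t. \<bar>t\<bar> \<le> M \<longrightarrow> \<bar>g t - (\<Sum>k\<le>N. b k * Bernstein N k ((sin (a * t) + 1) / 2))\<bar> \<le> \<eta>)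
                 \<and> (\<forall>k. 0 \<le> b k \<and> b k \<le> 1)"
proof -
  define a where "a = pi / (2 * M)"
  have "a > 0"
    using \<open>M > 0\<close> by (simp add: a_def)
  define h where "h x = g (arcsin (2 * x - 1) / a)" for x
  have "continuous_on {0..1} h"
    unfolding h_def using \<open>a > 0\<close>
    by (intro continuous_on_compose2[OF g_cont]) (auto intro!: continuous_intros)
  then obtain N where N: "\<And>x. x \<in> {0..1} \<Longrightarrow> \<bar>h x - (\<Sum>k\<le>N. h (k / N) * Bernstein N k x)\<bar> < \<eta>"
    using Bernstein_Weierstrass[OF _ \<open>\<eta> > 0\<close>] by blast
  have h_sin: "h ((sin (a * t) + 1) / 2) = g t" if "\<bar>t\<bar> \<le> M" for t
  proof -
    have "\<bar>a * t\<bar> \<le> pi / 2"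
      using that \<open>M > 0\<close> \<open>a > 0\<close> mult_left_mono[OF that, of a] by (simp add: a_def abs_mult)
    then have "- (pi / 2) \<le> a * t" "a * t \<le> pi / 2"
      by (simp_all add: abs_le_iff)
    then have "arcsin (sin (a * t)) = a * t"
      by (rule arcsin_sin)
    moreover have "2 * ((sin (a * t) + 1) / 2) - 1 = sin (a * t)"
      by (simp add: field_simps)
    ultimately show ?thesis
      using \<open>a > 0\<close> by (simp only: h_def) simp
  qed
  have "\<bar>g t - (\<Sum>k\<le>N. h (k / N) * Bernstein N k ((sin (a * t) + 1) / 2))\<bar> \<le> \<eta>" if "\<bar>t\<bar> \<le> M" for t
  proof -
    have "(sin (a * t) + 1) / 2 \<in> {0..1}"
      using sin_affine_bounds by simp
    then have "\<bar>h ((sin (a * t) + 1) / 2) - (\<Sum>k\<le>N. h (k / N) * Bernstein N k ((sin (a * t) + 1) / 2))\<bar> < \<eta>"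
      by (rule N)
    then show ?thesis
      using h_sin[OF that] by simp
  qed
  moreover have "0 \<le> h x \<and> h x \<le> 1" for x
    using g01 by (simp add: h_def)
  ultimately show ?thesis
    by (intro exI[of _ a] exI[of _ N] exI[of _ "\<lambda>k. h (real k / real N)"]) simp
qed

lemma trig_poly_uniform_approx:
  fixes h :: "real \<Rightarrow> real"
  assumes "continuous_on UNIV h" "\<And>t. 0 \<le> h t \<and> h t \<le> 1" "M > 0" "\<eta> > 0"
  obtains q where "continuous_on UNIV q" "\<And>t. 0 \<le> q t \<and> q t \<le> 1"
    and "\<And>t. \<bar>t\<bar> \<le> M \<Longrightarrow> \<bar>h t - q t\<bar> \<le> \<eta>"
    and "\<And>J j. j \<in> J \<Longrightarrow> finite J \<Longrightarrow> trig_poly J (\<lambda>z. of_real (q (z j)))"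
proof -
  obtain a N b where approx: "\<And>t. \<bar>t\<bar> \<le> M \<Longrightarrow> \<bar>h t - (\<Sum>k\<le>N. b k * Bernstein N k ((sin (a * t) + 1) / 2))\<bar> \<le> \<eta>"
    and b01: "\<And>k. 0 \<le> b k \<and> b k \<le> 1"
    using uniform_approx_Bernstein_sin[OF assms] by blast
  define q where "q t = (\<Sum>k\<le>N. b k * Bernstein N k ((sin (a * t) + 1) / 2))" for t
  have q01: "0 \<le> q t \<and> q t \<le> 1" for t
  proof
    show "0 \<le> q t"
      unfolding q_def using b01 sin_affine_bounds by (intro sum_nonneg mult_nonneg_nonneg Bernstein_nonneg) auto
    have "q t \<le> (\<Sum>k\<le>N. 1 * Bernstein N k ((sin (a * t) + 1) / 2))"
      unfolding q_def using b01 sin_affine_bounds by (intro sum_mono mult_right_mono Bernstein_nonneg) auto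
    then show "q t \<le> 1"
      by simp
  qed
  show ?thesis
  proof (rule that)
    show "continuous_on UNIV q"
      unfolding q_def Bernstein_def by (intro continuous_intros) auto
    show "0 \<le> q t \<and> q t \<le> 1" for t
      by (rule q01)
    show "\<bar>h t - q t\<bar> \<le> \<eta>" if "\<bar>t\<bar> \<le> M" for t
      using approx[OF that] by (simp add: q_def)
    show "trig_poly J (\<lambda>z. of_real (q (z j)))" if "j \<in> J" "finite J" for J j
      unfolding q_def by (rule trig_poly_Bernstein_sin[OF that])
  qed
qed

section \<open>A central limit theorem for profiles\<close>

lemma integral_of_bool: "(\<integral>w. of_bool (P w) \<partial>M) = (measure M {w \<in> space M. P w} :: real)"
proof -
  have "(\<integral>w. of_bool (P w) \<partial>M) = (\<integral>w. indicator {w. P w} w \<partial>M)"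
    by (simp add: indicator_def)
  also have "\<dots> = measure M ({w. P w} \<inter> space M)"
    by (rule Bochner_Integration.integral_indicator)
  also have "{w. P w} \<inter> space M = {w \<in> space M. P w}"
    by blast
  finally show ?thesis .
qed

lemma integral_abs_diff_le:
  fixes f g b :: "'a \<Rightarrow> real"
  assumes "integrable M f" "integrable M g" "integrable M b" "\<And>w. w \<in> space M \<Longrightarrow> \<bar>f w - g w\<bar> \<le> b w"
  shows "\<bar>(\<integral>w. f w \<partial>M) - (\<integral>w. g w \<partial>M)\<bar> \<le> (\<integral>w. b w \<partial>M)"
proof -
  have "(\<integral>w. f w - g w \<partial>M) \<le> (\<integral>w. b w \<partial>M)" "(\<integral>w. g w - f w \<partial>M) \<le> (\<integral>w. b w \<partial>M)"
    using assms by (intro integral_mono; force simp: abs_le_iff)+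
  then show ?thesis
    using assms(1,2) by (simp add: abs_le_iff)
qed

lemma of_bool_bex_le_sum:
  assumes "finite J"
  shows "of_bool (\<exists>j\<in>J. P j) \<le> (\<Sum>j\<in>J. of_bool (P j) :: real)"
proof (cases "\<exists>j\<in>J. P j")
  case True
  then obtain j where "j \<in> J" "P j"
    by blast
  then have "of_bool (P j) \<le> (\<Sum>j\<in>J. of_bool (P j) :: real)"
    using assms by (intro member_le_sum) auto
  then show ?thesis
    using True \<open>P j\<close> by simp
qed (simp add: sum_nonneg)

lemma sum_list_sum_swap: "(\<Sum>v\<leftarrow>vs. \<Sum>j\<in>J. f j v) = (\<Sum>j\<in>J. \<Sum>v\<leftarrow>vs. f j v)"
  by (induction vs) (simp_all add: sum.distrib)

lemma sum_square_expand:
  fixes w :: "'x \<Rightarrow> real"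
  shows "(\<Sum>x\<in>X. w x * (\<Sum>j\<in>J. \<theta> j * f j x)\<^sup>2) = (\<Sum>j\<in>J. \<Sum>l\<in>J. \<theta> j * \<theta> l * (\<Sum>x\<in>X. w x * f j x * f l x))"
proof -
  have "(\<Sum>x\<in>X. w x * (\<Sum>j\<in>J. \<theta> j * f j x)\<^sup>2) = (\<Sum>x\<in>X. \<Sum>j\<in>J. \<Sum>l\<in>J. \<theta> j * \<theta> l * (w x * f j x * f l x))"
    by (intro sum.cong refl) (simp add: power2_eq_square sum_product sum_distrib_left mult_ac)
  also have "\<dots> = (\<Sum>j\<in>J. \<Sum>l\<in>J. \<Sum>x\<in>X. \<theta> j * \<theta> l * (w x * f j x * f l x))"
    by (simp add: sum.swap[of _ X])
  finally show ?thesis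
    by (simp add: sum_distrib_left)
qed

lemma tendsto_sandwich_approximation:
  fixes a :: "nat \<Rightarrow> real"
  assumes "\<And>\<epsilon>. \<epsilon> > 0 \<Longrightarrow> \<exists>lo hi cl ch. lo \<longlonglongrightarrow> cl \<and> hi \<longlonglongrightarrow> ch \<and> (\<forall>n. lo n \<le> a n \<and> a n \<le> hi n)
                                       \<and> L - \<epsilon> \<le> cl \<and> ch \<le> L + \<epsilon>"
  shows "a \<longlonglongrightarrow> L"
proof (rule LIMSEQ_I)
  fix r :: real
  assume "r > 0"
  then obtain lo hi cl ch where lo: "lo \<longlonglongrightarrow> cl" and hi: "hi \<longlonglongrightarrow> ch"
    and between: "\<forall>n. lo n \<le> a n \<and> a n \<le> hi n" and "L - r / 2 \<le> cl" "ch \<le> L + r / 2"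
    using assms[of "r / 2"] by auto
  obtain n1 where n1: "\<And>n. n \<ge> n1 \<Longrightarrow> \<bar>lo n - cl\<bar> < r / 2"
    using LIMSEQ_D[OF lo, of "r / 2"] \<open>r > 0\<close> by auto
  obtain n2 where n2: "\<And>n. n \<ge> n2 \<Longrightarrow> \<bar>hi n - ch\<bar> < r / 2"
    using LIMSEQ_D[OF hi, of "r / 2"] \<open>r > 0\<close> by auto
  show "\<exists>no. \<forall>n\<ge>no. norm (a n - L) < r"
  proof (intro exI allI impI)
    fix n
    assume "max n1 n2 \<le> n"
    then have "\<bar>lo n - cl\<bar> < r / 2" "\<bar>hi n - ch\<bar> < r / 2"
      using n1 n2 by auto
    moreover have "lo n \<le> a n" "a n \<le> hi n"
      using between by auto
    ultimately show "norm (a n - L) < r"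
      using \<open>L - r / 2 \<le> cl\<close> \<open>ch \<le> L + r / 2\<close> by (simp only: real_norm_def abs_less_iff) linarith
  qed
qed

lemma prod_approx_bound:
  fixes g q :: "real \<Rightarrow> real" and \<eta> M :: real
  assumes "finite J" and g01: "\<And>t. 0 \<le> g t \<and> g t \<le> 1" and q01: "\<And>t. 0 \<le> q t \<and> q t \<le> 1"
    and "\<eta> \<ge> 0" and close: "\<And>t. \<bar>t\<bar> \<le> M \<Longrightarrow> \<bar>g t - q t\<bar> \<le> \<eta>"
  shows "\<bar>(\<Prod>j\<in>J. g (z j)) - (\<Prod>j\<in>J. q (z j))\<bar> \<le> card J * \<eta> + of_bool (\<exists>j\<in>J. M \<le> \<bar>z j\<bar>)"
proof (cases "\<exists>j\<in>J. M \<le> \<bar>z j\<bar>")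
  case True
  have "0 \<le> (\<Prod>j\<in>J. g (z j))" "(\<Prod>j\<in>J. g (z j)) \<le> 1" "0 \<le> (\<Prod>j\<in>J. q (z j))" "(\<Prod>j\<in>J. q (z j)) \<le> 1"
    using g01 q01 by (auto intro!: prod_nonneg prod_le_1)
  then have "\<bar>(\<Prod>j\<in>J. g (z j)) - (\<Prod>j\<in>J. q (z j))\<bar> \<le> 1"
    unfolding abs_le_iff by linarith
  moreover have "0 \<le> card J * \<eta>"
    using \<open>\<eta> \<ge> 0\<close> by simp
  ultimately show ?thesis
    using True by simp
next
  case False
  have "norm ((\<Prod>j\<in>J. g (z j)) - (\<Prod>j\<in>J. q (z j))) \<le> (\<Sum>j\<in>J. norm (g (z j) - q (z j)))"
    using g01 q01 by (intro norm_prod_diff) auto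
  also have "\<dots> \<le> (\<Sum>j\<in>J. \<eta>)"
    using False close by (intro sum_mono) auto
  finally show ?thesis
    using False by simp
qed

lemma prod_orthant_bound:
  fixes g :: "real \<Rightarrow> real"
  assumes "finite J" and g01: "\<And>t. 0 \<le> g t \<and> g t \<le> 1"
    and g_pos: "\<And>t. t > \<delta> \<Longrightarrow> g t = 1" and g_neg: "\<And>t. t < - \<delta> \<Longrightarrow> g t = 0"
  shows "\<bar>(\<Prod>j\<in>J. g (z j)) - of_bool (\<forall>j\<in>J. 0 \<le> z j)\<bar> \<le> (\<Sum>j\<in>J. of_bool (\<bar>z j\<bar> \<le> \<delta>))"
proof (cases "\<exists>j\<in>J. \<bar>z j\<bar> \<le> \<delta>")
  case True
  then have "1 \<le> (\<Sum>j\<in>J. of_bool (\<bar>z j\<bar> \<le> \<delta>) :: real)"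
    using of_bool_bex_le_sum[OF \<open>finite J\<close>, of "\<lambda>j. \<bar>z j\<bar> \<le> \<delta>"] by simp
  moreover have "0 \<le> (\<Prod>j\<in>J. g (z j))" "(\<Prod>j\<in>J. g (z j)) \<le> 1"
    using g01 by (auto intro!: prod_nonneg prod_le_1)
  ultimately show ?thesis
    by (cases "\<forall>j\<in>J. 0 \<le> z j") (simp_all add: abs_le_iff)
next
  case False
  then have far: "\<delta> < \<bar>z j\<bar>" if "j \<in> J" for j
    using that by force
  have "(\<Prod>j\<in>J. g (z j)) = of_bool (\<forall>j\<in>J. 0 \<le> z j)"
  proof (cases "\<forall>j\<in>J. 0 \<le> z j")
    case True
    then have "\<forall>j\<in>J. g (z j) = 1"
      using far by (auto intro!: g_pos)
    then show ?thesis
      using True by simp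
  next
    case False
    then obtain j where "j \<in> J" "z j < 0"
      by force
    then have "g (z j) = 0"
      using far[of j] by (intro g_neg) simp
    then have "(\<Prod>j\<in>J. g (z j)) = 0"
      using \<open>j \<in> J\<close> \<open>finite J\<close> by (intro prod_zero) blast+
    then show ?thesis
      using False by simp
  qed
  then show ?thesis
    by (simp add: sum_nonneg)
qed

definition ramp :: "real \<Rightarrow> real \<Rightarrow> real" where
  "ramp \<delta> t = min 1 (max 0 (t / \<delta>))"

lemma continuous_on_ramp: "continuous_on UNIV (ramp \<delta>)"
  unfolding ramp_def by (cases "\<delta> = 0") (auto intro!: continuous_intros)

lemma ramp_bounds: "0 \<le> ramp \<delta> t \<and> ramp \<delta> t \<le> 1"
  by (simp add: ramp_def)

lemma ramp_nonpos: "\<delta> > 0 \<Longrightarrow> t \<le> 0 \<Longrightarrow> ramp \<delta> t = 0"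
  by (simp add: ramp_def divide_nonpos_pos)

lemma ramp_ge: "\<delta> > 0 \<Longrightarrow> \<delta> \<le> t \<Longrightarrow> ramp \<delta> t = 1"
  by (simp add: ramp_def)

locale gaussian_limit = voter_distribution m p for m p +
  fixes J K :: "nat set" and g :: "nat \<Rightarrow> nat list \<Rightarrow> real" and A :: "nat \<Rightarrow> nat \<Rightarrow> real"
  assumes finite_J: "finite J" and finite_K: "finite K"
    and g_centered: "\<And>j. j \<in> J \<Longrightarrow> (\<Sum>r\<in>rankings m. p r * g j r) = 0"
    and g_unit_variance: "\<And>j. j \<in> J \<Longrightarrow> (\<Sum>r\<in>rankings m. p r * (g j r)\<^sup>2) = 1"
    and A_covariance: "\<And>j l. j \<in> J \<Longrightarrow> l \<in> J \<Longrightarrow> (\<Sum>k\<in>K. A j k * A l k) = (\<Sum>r\<in>rankings m. p r * g j r * g l r)"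
begin

definition scaled_sum :: "nat \<Rightarrow> nat list list \<Rightarrow> nat \<Rightarrow> real" where
  "scaled_sum n vs j = (\<Sum>v\<leftarrow>vs. g j v) / sqrt (real n)"

definition gauss :: "(nat \<Rightarrow> real) \<Rightarrow> nat \<Rightarrow> real" where
  "gauss w j = (\<Sum>k\<in>K. A j k * w k)"

lemma gauss_measurable [measurable]: "(\<lambda>w. gauss w j) \<in> borel_measurable (std_normal_vec K)"
  unfolding gauss_def by measurable

lemma distr_gauss:
  assumes "j \<in> J"
  shows "distr (std_normal_vec K) borel (\<lambda>w. gauss w j) = std_normal"
proof -
  have "(\<Sum>k\<in>K. (A j k)\<^sup>2) = 1"
    using A_covariance[OF assms assms] g_unit_variance[OF assms] by (simp add: power2_eq_square mult.assoc)
  then show ?thesis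
    unfolding gauss_def by (rule distr_unit_linear_form[OF finite_K])
qed

lemma gauss_abs_le:
  assumes "j \<in> J" "\<delta> \<ge> 0"
  shows "measure (std_normal_vec K) {w \<in> space (std_normal_vec K). \<bar>gauss w j\<bar> \<le> \<delta>} \<le> \<delta>"
proof -
  have "measure (std_normal_vec K) {w \<in> space (std_normal_vec K). \<bar>gauss w j\<bar> \<le> \<delta>}
      = measure (distr (std_normal_vec K) borel (\<lambda>w. gauss w j)) {x. \<bar>x\<bar> \<le> \<delta>}"
    by (subst measure_distr) (auto simp: vimage_def Int_def conj_commute)
  then show ?thesis
    using std_normal_abs_le[OF assms(2)] by (simp add: distr_gauss[OF assms(1)])
qed

lemma gauss_tail:
  assumes "M > 0"
  shows "measure (std_normal_vec K) {w \<in> space (std_normal_vec K). \<exists>j\<in>J. M \<le> \<bar>gauss w j\<bar>} \<le> card J / M\<^sup>2"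
proof -
  have "{w \<in> space (std_normal_vec K). \<exists>j\<in>J. M \<le> \<bar>gauss w j\<bar>}
      = (\<Union>j\<in>J. {w \<in> space (std_normal_vec K). M \<le> \<bar>gauss w j\<bar>})"
    by blast
  then have "measure (std_normal_vec K) {w \<in> space (std_normal_vec K). \<exists>j\<in>J. M \<le> \<bar>gauss w j\<bar>}
      \<le> (\<Sum>j\<in>J. measure (std_normal_vec K) {w \<in> space (std_normal_vec K). M \<le> \<bar>gauss w j\<bar>})"
    by (simp only:) (rule measure_UNION_le[OF finite_J], measurable)
  also have "\<dots> \<le> (\<Sum>j\<in>J. 1 / M\<^sup>2)"
  proof (rule sum_mono)
    fix j
    assume "j \<in> J"
    have "measure (std_normal_vec K) {w \<in> space (std_normal_vec K). M \<le> \<bar>gauss w j\<bar>}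
        = measure (distr (std_normal_vec K) borel (\<lambda>w. gauss w j)) {x. M \<le> \<bar>x\<bar>}"
      by (subst measure_distr) (auto simp: vimage_def Int_def conj_commute)
    then show "measure (std_normal_vec K) {w \<in> space (std_normal_vec K). M \<le> \<bar>gauss w j\<bar>} \<le> 1 / M\<^sup>2"
      using std_normal_abs_ge[OF assms] by (simp add: distr_gauss[OF \<open>j \<in> J\<close>])
  qed
  finally show ?thesis
    by simp
qed

lemma integral_exp_char_gauss:
  "(\<integral>w. exp_char J \<theta> (gauss w) \<partial>std_normal_vec K)
     = of_real (exp (- (\<Sum>r\<in>rankings m. p r * (\<Sum>j\<in>J. \<theta> j * g j r)\<^sup>2) / 2))"
proof -
  have linear_form: "exp_char J \<theta> (gauss w) = iexp (\<Sum>k\<in>K. (\<Sum>j\<in>J. \<theta> j * A j k) * w k)" for w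
    by (simp add: exp_char_def gauss_def sum_distrib_left sum_distrib_right sum.swap[of _ J] mult_ac)
  have "(\<integral>w. exp_char J \<theta> (gauss w) \<partial>std_normal_vec K)
      = of_real (exp (- (\<Sum>k\<in>K. (\<Sum>j\<in>J. \<theta> j * A j k)\<^sup>2) / 2))"
    unfolding linear_form by (rule integral_iexp_linear_form[OF finite_K])
  also have "(\<Sum>k\<in>K. (\<Sum>j\<in>J. \<theta> j * A j k)\<^sup>2) = (\<Sum>k\<in>K. 1 * (\<Sum>j\<in>J. \<theta> j * A j k)\<^sup>2)"
    by simp
  also have "\<dots> = (\<Sum>j\<in>J. \<Sum>l\<in>J. \<theta> j * \<theta> l * (\<Sum>r\<in>rankings m. p r * g j r * g l r))"
    unfolding sum_square_expand using A_covariance by simp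
  also have "\<dots> = (\<Sum>r\<in>rankings m. p r * (\<Sum>j\<in>J. \<theta> j * g j r)\<^sup>2)"
    by (rule sum_square_expand[symmetric])
  finally show ?thesis .
qed

lemma expect_exp_char_tendsto:
  "(\<lambda>n. expect n (\<lambda>vs. exp_char J \<theta> (scaled_sum n vs))) \<longlonglongrightarrow> (\<integral>w. exp_char J \<theta> (gauss w) \<partial>std_normal_vec K)"
proof -
  define y where "y r = (\<Sum>j\<in>J. \<theta> j * g j r)" for r
  have "exp_char J \<theta> (scaled_sum n vs) = iexp ((\<Sum>v\<leftarrow>vs. y v) / sqrt (real n))" for n vs
    by (simp add: exp_char_def scaled_sum_def y_def sum_list_sum_swap sum_distrib_left sum_list_const_mult
        flip: sum_divide_distrib)
  moreover have "(\<Sum>r\<in>rankings m. p r * y r) = (\<Sum>j\<in>J. \<theta> j * (\<Sum>r\<in>rankings m. p r * g j r))"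
    by (simp add: y_def sum_distrib_left sum.swap[of _ J] mult_ac)
  then have "(\<Sum>r\<in>rankings m. p r * y r) = 0"
    using g_centered by simp
  ultimately show ?thesis
    using char_sum_list_tendsto[of y] by (simp add: integral_exp_char_gauss y_def)
qed

lemma integrable_exp_char_gauss: "integrable (std_normal_vec K) (\<lambda>w. exp_char J \<theta> (gauss w))"
  unfolding exp_char_def by (rule prob_space.integrable_iexp[OF prob_space_std_normal_vec]) auto

lemma expect_trig_sum_tendsto:
  "(\<lambda>n. expect n (\<lambda>vs. trig_sum J L (scaled_sum n vs))) \<longlonglongrightarrow> (\<integral>w. trig_sum J L (gauss w) \<partial>std_normal_vec K)"
proof (induction L)
  case (Cons a L)
  obtain c \<theta> where a: "a = (c, \<theta>)"
    by fastforce
  have "integrable (std_normal_vec K) (\<lambda>w. trig_sum J L (gauss w))" for L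
    by (induction L) (auto intro!: Bochner_Integration.integrable_add integrable_mult_right integrable_exp_char_gauss)
  then have "(\<integral>w. trig_sum J (a # L) (gauss w) \<partial>std_normal_vec K)
      = c * (\<integral>w. exp_char J \<theta> (gauss w) \<partial>std_normal_vec K) + (\<integral>w. trig_sum J L (gauss w) \<partial>std_normal_vec K)"
    by (simp add: a integrable_exp_char_gauss)
  moreover have "expect n (\<lambda>vs. trig_sum J (a # L) (scaled_sum n vs))
      = c * expect n (\<lambda>vs. exp_char J \<theta> (scaled_sum n vs)) + expect n (\<lambda>vs. trig_sum J L (scaled_sum n vs))" for n
    by (simp add: a expect_add expect_scale)
  ultimately show ?case
    by (simp only:) (intro tendsto_intros expect_exp_char_tendsto Cons.IH)
qed simp

lemma expect_trig_poly_tendsto: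
  assumes "trig_poly J (\<lambda>z. of_real (F z))"
  shows "(\<lambda>n. expect n (\<lambda>vs. F (scaled_sum n vs))) \<longlonglongrightarrow> (\<integral>w. F (gauss w) \<partial>std_normal_vec K)"
proof -
  obtain L where L: "\<And>z. of_real (F z) = trig_sum J L z"
    using assms unfolding trig_poly_def by blast
  have "(\<lambda>n. expect n (\<lambda>vs. of_real (F (scaled_sum n vs))))
      \<longlonglongrightarrow> (\<integral>w. of_real (F (gauss w)) \<partial>std_normal_vec K :: complex)"
    unfolding L by (rule expect_trig_sum_tendsto)
  then have "(\<lambda>n. of_real (expect n (\<lambda>vs. F (scaled_sum n vs))))
      \<longlonglongrightarrow> (of_real (\<integral>w. F (gauss w) \<partial>std_normal_vec K) :: complex)"
    by (simp only: expect_of_real integral_complex_of_real)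
  then show ?thesis
    by (simp only: tendsto_of_real_iff)
qed

end

context gaussian_limit
begin

lemma expect_scaled_tail:
  assumes "M > 0"
  shows "expect n (\<lambda>vs. of_bool (\<exists>j\<in>J. M \<le> \<bar>scaled_sum n vs j\<bar>)) \<le> real (card J) / M\<^sup>2"
proof (cases "n = 0")
  case True
  then show ?thesis
    using assms by (simp add: scaled_sum_def)
next
  case False
  define D where "D vs j = (\<Sum>v\<leftarrow>vs. g j v) - real n * (\<Sum>r\<in>rankings m. p r * g j r)" for vs j
  have "M * sqrt (real n) \<le> \<bar>D vs j\<bar>" if "j \<in> J" "M \<le> \<bar>scaled_sum n vs j\<bar>" for vs j
    using that False g_centered by (simp add: D_def scaled_sum_def field_simps)
  then have "of_bool (\<exists>j\<in>J. M \<le> \<bar>scaled_sum n vs j\<bar>) \<le> (of_bool (\<exists>j\<in>J. M * sqrt (real n) \<le> \<bar>D vs j\<bar>) :: real)" for vs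
    by (auto simp: of_bool_def)
  also have "\<dots> vs \<le> (\<Sum>j\<in>J. of_bool (M * sqrt (real n) \<le> \<bar>D vs j\<bar>))" for vs
    by (rule of_bool_bex_le_sum[OF finite_J])
  finally have point: "of_bool (\<exists>j\<in>J. M \<le> \<bar>scaled_sum n vs j\<bar>) \<le> (\<Sum>j\<in>J. of_bool (M * sqrt (real n) \<le> \<bar>D vs j\<bar>) :: real)" for vs .
  have "expect n (\<lambda>vs. of_bool (\<exists>j\<in>J. M \<le> \<bar>scaled_sum n vs j\<bar>) :: real)
      \<le> (\<Sum>j\<in>J. expect n (\<lambda>vs. of_bool (M * sqrt (real n) \<le> \<bar>D vs j\<bar>)))"
    by (simp only: flip: expect_sum) (intro expect_mono point)
  also have "\<dots> \<le> (\<Sum>j\<in>J. real n * (\<Sum>r\<in>rankings m. p r * (g j r - (\<Sum>r\<in>rankings m. p r * g j r))\<^sup>2)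
                                / (M * sqrt (real n))\<^sup>2)"
    unfolding D_def using assms False by (intro sum_mono expect_chebyshev) simp
  also have "\<dots> = (\<Sum>j\<in>J. 1 / M\<^sup>2)"
    using False g_centered g_unit_variance by (intro sum.cong) (simp_all add: power_mult_distrib)
  finally show ?thesis
    by simp
qed

lemma expect_prod_approx:
  fixes h q :: "real \<Rightarrow> real" and \<eta> M :: real
  assumes h01: "\<And>t. 0 \<le> h t \<and> h t \<le> 1" and q01: "\<And>t. 0 \<le> q t \<and> q t \<le> 1"
    and "\<eta> \<ge> 0" "M > 0" and close: "\<And>t. \<bar>t\<bar> \<le> M \<Longrightarrow> \<bar>h t - q t\<bar> \<le> \<eta>"
  shows "\<bar>expect n (\<lambda>vs. \<Prod>j\<in>J. h (scaled_sum n vs j)) - expect n (\<lambda>vs. \<Prod>j\<in>J. q (scaled_sum n vs j))\<bar>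
           \<le> card J * \<eta> + card J / M\<^sup>2"
proof -
  have "\<bar>expect n (\<lambda>vs. \<Prod>j\<in>J. h (scaled_sum n vs j)) - expect n (\<lambda>vs. \<Prod>j\<in>J. q (scaled_sum n vs j))\<bar>
      \<le> expect n (\<lambda>vs. card J * \<eta> + of_bool (\<exists>j\<in>J. M \<le> \<bar>scaled_sum n vs j\<bar>))"
    by (rule expect_abs_diff_le) (rule prod_approx_bound[OF finite_J h01 q01 \<open>\<eta> \<ge> 0\<close> close])
  also have "\<dots> \<le> card J * \<eta> + card J / M\<^sup>2"
    using expect_scaled_tail[OF \<open>M > 0\<close>, of n] by (simp add: expect_add)
  finally show ?thesis .
qed

lemma gauss_prod_approx:
  fixes h q :: "real \<Rightarrow> real" and \<eta> M :: real
  assumes h01: "\<And>t. 0 \<le> h t \<and> h t \<le> 1" and q01: "\<And>t. 0 \<le> q t \<and> q t \<le> 1"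
    and [measurable]: "h \<in> borel_measurable borel" "q \<in> borel_measurable borel"
    and "\<eta> \<ge> 0" "M > 0" and close: "\<And>t. \<bar>t\<bar> \<le> M \<Longrightarrow> \<bar>h t - q t\<bar> \<le> \<eta>"
  shows "\<bar>(\<integral>w. (\<Prod>j\<in>J. h (gauss w j)) \<partial>std_normal_vec K) - (\<integral>w. (\<Prod>j\<in>J. q (gauss w j)) \<partial>std_normal_vec K)\<bar>
           \<le> card J * \<eta> + card J / M\<^sup>2"
proof -
  interpret N: prob_space "std_normal_vec K"
    by (rule prob_space_std_normal_vec)
  have integrable_prod: "integrable (std_normal_vec K) (\<lambda>w. \<Prod>j\<in>J. f (gauss w j))"
    if "f \<in> borel_measurable borel" "\<And>t. 0 \<le> f t \<and> f t \<le> 1" for f :: "real \<Rightarrow> real"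
    by (intro N.integrable_const_bound[where B = 1]) (use that in \<open>auto simp: prod_nonneg prod_le_1\<close>)
  have "integrable (std_normal_vec K) (\<lambda>w. card J * \<eta> + of_bool (\<exists>j\<in>J. M \<le> \<bar>gauss w j\<bar>))"
    by (intro N.integrable_const_bound[where B = "card J * \<eta> + 1"]) (use \<open>\<eta> \<ge> 0\<close> in auto)
  then have "\<bar>(\<integral>w. (\<Prod>j\<in>J. h (gauss w j)) \<partial>std_normal_vec K) - (\<integral>w. (\<Prod>j\<in>J. q (gauss w j)) \<partial>std_normal_vec K)\<bar>
      \<le> (\<integral>w. card J * \<eta> + of_bool (\<exists>j\<in>J. M \<le> \<bar>gauss w j\<bar>) \<partial>std_normal_vec K)"
    using integrable_prod[of h] integrable_prod[of q] h01 q01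
    by (intro integral_abs_diff_le prod_approx_bound[OF finite_J h01 q01 \<open>\<eta> \<ge> 0\<close> close]) auto
  also have "\<dots> = card J * \<eta> + measure (std_normal_vec K) {w \<in> space (std_normal_vec K). \<exists>j\<in>J. M \<le> \<bar>gauss w j\<bar>}"
    by (subst Bochner_Integration.integral_add)
       (auto simp: integral_of_bool N.prob_space intro!: N.integrable_const_bound[where B = 1])
  also have "\<dots> \<le> card J * \<eta> + card J / M\<^sup>2"
    using gauss_tail[OF \<open>M > 0\<close>] by simp
  finally show ?thesis .
qed

lemma expect_prod_tendsto:
  fixes h :: "real \<Rightarrow> real"
  assumes h_cont: "continuous_on UNIV h" and h01: "\<And>t. 0 \<le> h t \<and> h t \<le> 1"
  shows "(\<lambda>n. expect n (\<lambda>vs. \<Prod>j\<in>J. h (scaled_sum n vs j))) \<longlonglongrightarrow> (\<integral>w. (\<Prod>j\<in>J. h (gauss w j)) \<partial>std_normal_vec K)"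
proof (rule tendsto_sandwich_approximation)
  fix \<epsilon> :: real
  assume "\<epsilon> > 0"
  define \<eta> where "\<eta> = \<epsilon> / (4 * (card J + 1))"
  define M where "M = sqrt (4 * (card J + 1) / \<epsilon>)"
  have "\<eta> > 0" "M > 0"
    using \<open>\<epsilon> > 0\<close> by (simp_all add: \<eta>_def M_def)
  have "card J * \<eta> \<le> \<epsilon> / 4" "card J / M\<^sup>2 \<le> \<epsilon> / 4"
    using \<open>\<epsilon> > 0\<close> by (simp_all add: \<eta>_def M_def field_simps)
  then have error: "card J * \<eta> + card J / M\<^sup>2 \<le> \<epsilon> / 2"
    by linarith
  obtain q where q_cont: "continuous_on UNIV q" and q01: "\<And>t. 0 \<le> q t \<and> q t \<le> 1"
    and close: "\<And>t. \<bar>t\<bar> \<le> M \<Longrightarrow> \<bar>h t - q t\<bar> \<le> \<eta>"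
    and q_trig: "\<And>I j. j \<in> I \<Longrightarrow> finite (I :: nat set) \<Longrightarrow> trig_poly I (\<lambda>z. of_real (q (z j)))"
    using trig_poly_uniform_approx[OF h_cont h01 \<open>M > 0\<close> \<open>\<eta> > 0\<close>] by blast
  have h_meas: "h \<in> borel_measurable borel" and q_meas: "q \<in> borel_measurable borel"
    using h_cont q_cont by (simp_all add: borel_measurable_continuous_onI)
  have "trig_poly J (\<lambda>z. of_real (\<Prod>j\<in>J. q (z j)))"
    unfolding of_real_prod
  proof (rule trig_poly_prod)
    fix j
    assume "j \<in> J"
    then show "trig_poly J (\<lambda>z. of_real (q (z j)))"
      using finite_J by (rule q_trig)
  qed
  then have q_lim: "(\<lambda>n. expect n (\<lambda>vs. \<Prod>j\<in>J. q (scaled_sum n vs j))) \<longlonglongrightarrow> (\<integral>w. (\<Prod>j\<in>J. q (gauss w j)) \<partial>std_normal_vec K)"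
    by (rule expect_trig_poly_tendsto)
  define Eq where "Eq n = expect n (\<lambda>vs. \<Prod>j\<in>J. q (scaled_sum n vs j))" for n
  define Iq where "Iq = (\<integral>w. (\<Prod>j\<in>J. q (gauss w j)) \<partial>std_normal_vec K)"
  have discrete: "\<bar>expect n (\<lambda>vs. \<Prod>j\<in>J. h (scaled_sum n vs j)) - Eq n\<bar> \<le> \<epsilon> / 2" for n
    using expect_prod_approx[of h q \<eta> M n, OF h01 q01 _ \<open>M > 0\<close> close] \<open>\<eta> > 0\<close> error
    unfolding Eq_def by linarith
  have between: "\<forall>n. Eq n - \<epsilon> / 2 \<le> expect n (\<lambda>vs. \<Prod>j\<in>J. h (scaled_sum n vs j))
      \<and> expect n (\<lambda>vs. \<Prod>j\<in>J. h (scaled_sum n vs j)) \<le> Eq n + \<epsilon> / 2"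
  proof
    fix n
    show "Eq n - \<epsilon> / 2 \<le> expect n (\<lambda>vs. \<Prod>j\<in>J. h (scaled_sum n vs j))
        \<and> expect n (\<lambda>vs. \<Prod>j\<in>J. h (scaled_sum n vs j)) \<le> Eq n + \<epsilon> / 2"
      using abs_le_D1[OF discrete[of n]] abs_le_D2[OF discrete[of n]] by simp
  qed
  have gaussian: "\<bar>(\<integral>w. (\<Prod>j\<in>J. h (gauss w j)) \<partial>std_normal_vec K) - Iq\<bar> \<le> \<epsilon> / 2"
    using gauss_prod_approx[of h q \<eta> M, OF h01 q01 h_meas q_meas _ \<open>M > 0\<close> close] \<open>\<eta> > 0\<close> error
    unfolding Iq_def by linarith
  have limits: "(\<integral>w. (\<Prod>j\<in>J. h (gauss w j)) \<partial>std_normal_vec K) - \<epsilon> \<le> Iq - \<epsilon> / 2"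
    "Iq + \<epsilon> / 2 \<le> (\<integral>w. (\<Prod>j\<in>J. h (gauss w j)) \<partial>std_normal_vec K) + \<epsilon>"
    using abs_le_D1[OF gaussian] abs_le_D2[OF gaussian] by linarith+
  have "(\<lambda>n. Eq n - \<epsilon> / 2) \<longlonglongrightarrow> Iq - \<epsilon> / 2" "(\<lambda>n. Eq n + \<epsilon> / 2) \<longlonglongrightarrow> Iq + \<epsilon> / 2"
    using q_lim unfolding Eq_def Iq_def by (auto intro!: tendsto_intros)
  then show "\<exists>lo hi cl ch. lo \<longlonglongrightarrow> cl \<and> hi \<longlonglongrightarrow> ch
      \<and> (\<forall>n. lo n \<le> expect n (\<lambda>vs. \<Prod>j\<in>J. h (scaled_sum n vs j)) \<and> expect n (\<lambda>vs. \<Prod>j\<in>J. h (scaled_sum n vs j)) \<le> hi n)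
      \<and> (\<integral>w. (\<Prod>j\<in>J. h (gauss w j)) \<partial>std_normal_vec K) - \<epsilon> \<le> cl \<and> ch \<le> (\<integral>w. (\<Prod>j\<in>J. h (gauss w j)) \<partial>std_normal_vec K) + \<epsilon>"
    using between limits by blast
qed

lemma gauss_orthant_approx:
  fixes h :: "real \<Rightarrow> real" and \<delta> :: real
  assumes h01: "\<And>t. 0 \<le> h t \<and> h t \<le> 1" and [measurable]: "h \<in> borel_measurable borel"
    and "\<delta> \<ge> 0" and h_pos: "\<And>t. t > \<delta> \<Longrightarrow> h t = 1" and h_neg: "\<And>t. t < - \<delta> \<Longrightarrow> h t = 0"
  shows "\<bar>(\<integral>w. (\<Prod>j\<in>J. h (gauss w j)) \<partial>std_normal_vec K)
           - measure (std_normal_vec K) {w \<in> space (std_normal_vec K). \<forall>j\<in>J. 0 \<le> gauss w j}\<bar> \<le> card J * \<delta>"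
proof -
  interpret N: prob_space "std_normal_vec K"
    by (rule prob_space_std_normal_vec)
  have "integrable (std_normal_vec K) (\<lambda>w. \<Prod>j\<in>J. h (gauss w j))"
    by (intro N.integrable_const_bound[where B = 1]) (use h01 in \<open>auto simp: prod_nonneg prod_le_1\<close>)
  moreover have "integrable (std_normal_vec K) (\<lambda>w. of_bool (\<forall>j\<in>J. 0 \<le> gauss w j) :: real)"
    by (intro N.integrable_const_bound[where B = 1]) auto
  moreover have "integrable (std_normal_vec K) (\<lambda>w. \<Sum>j\<in>J. of_bool (\<bar>gauss w j\<bar> \<le> \<delta>) :: real)"
    by (intro Bochner_Integration.integrable_sum N.integrable_const_bound[where B = 1]) auto
  ultimately have "\<bar>(\<integral>w. (\<Prod>j\<in>J. h (gauss w j)) \<partial>std_normal_vec K) - (\<integral>w. of_bool (\<forall>j\<in>J. 0 \<le> gauss w j) \<partial>std_normal_vec K)\<bar>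
      \<le> (\<integral>w. (\<Sum>j\<in>J. of_bool (\<bar>gauss w j\<bar> \<le> \<delta>)) \<partial>std_normal_vec K)"
    by (rule integral_abs_diff_le) (rule prod_orthant_bound[OF finite_J h01 h_pos h_neg])
  also have "\<dots> = (\<Sum>j\<in>J. measure (std_normal_vec K) {w \<in> space (std_normal_vec K). \<bar>gauss w j\<bar> \<le> \<delta>})"
    by (subst Bochner_Integration.integral_sum) (auto simp: integral_of_bool intro!: N.integrable_const_bound[where B = 1])
  also have "\<dots> \<le> (\<Sum>j\<in>J. \<delta>)"
    using \<open>\<delta> \<ge> 0\<close> by (intro sum_mono gauss_abs_le)
  finally show ?thesis
    by (simp add: integral_of_bool)
qed

lemma prod_ramp_le_orthant:
  assumes "\<delta> > 0"
  shows "(\<Prod>j\<in>J. ramp \<delta> (scaled_sum n vs j)) \<le> of_bool (\<forall>j\<in>J. 0 < (\<Sum>v\<leftarrow>vs. g j v))"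
proof (cases "\<forall>j\<in>J. 0 < (\<Sum>v\<leftarrow>vs. g j v)")
  case True
  then show ?thesis
    using ramp_bounds by (simp add: prod_le_1)
next
  case False
  then obtain j where "j \<in> J" "(\<Sum>v\<leftarrow>vs. g j v) \<le> 0"
    by force
  then have "ramp \<delta> (scaled_sum n vs j) = 0"
    using \<open>\<delta> > 0\<close> by (intro ramp_nonpos) (simp_all add: scaled_sum_def divide_nonpos_nonneg)
  then have "(\<Prod>j\<in>J. ramp \<delta> (scaled_sum n vs j)) = 0"
    using \<open>j \<in> J\<close> finite_J by (intro prod_zero) blast+
  moreover have "of_bool (\<forall>j\<in>J. 0 < (\<Sum>v\<leftarrow>vs. g j v)) = (0 :: real)"
    using False by simp
  ultimately show ?thesis
    by simp
qed

lemma orthant_le_prod_ramp: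
  assumes "\<delta> > 0"
  shows "of_bool (\<forall>j\<in>J. 0 < (\<Sum>v\<leftarrow>vs. g j v)) \<le> (\<Prod>j\<in>J. ramp \<delta> (scaled_sum n vs j + \<delta>))"
proof (cases "\<forall>j\<in>J. 0 < (\<Sum>v\<leftarrow>vs. g j v)")
  case True
  then have "ramp \<delta> (scaled_sum n vs j + \<delta>) = 1" if "j \<in> J" for j
    using that \<open>\<delta> > 0\<close> by (intro ramp_ge) (auto simp: scaled_sum_def)
  then show ?thesis
    using True by simp
next
  case False
  have "0 \<le> (\<Prod>j\<in>J. ramp \<delta> (scaled_sum n vs j + \<delta>))"
    using ramp_bounds by (simp add: prod_nonneg)
  then show ?thesis
    by (simp only: False of_bool_eq(1))
qed

lemma orthant_tendsto:
  "(\<lambda>n. expect n (\<lambda>vs. of_bool (\<forall>j\<in>J. 0 < (\<Sum>v\<leftarrow>vs. g j v))))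
     \<longlonglongrightarrow> measure (std_normal_vec K) {w \<in> space (std_normal_vec K). \<forall>j\<in>J. 0 \<le> gauss w j}"
proof (rule tendsto_sandwich_approximation)
  fix \<epsilon> :: real
  assume "\<epsilon> > 0"
  define \<delta> where "\<delta> = \<epsilon> / (card J + 1)"
  have "\<delta> > 0" "card J * \<delta> \<le> \<epsilon>"
    using \<open>\<epsilon> > 0\<close> by (simp_all add: \<delta>_def field_simps)
  define L where "L = measure (std_normal_vec K) {w \<in> space (std_normal_vec K). \<forall>j\<in>J. 0 \<le> gauss w j}"
  have ramp_shift_cont: "continuous_on UNIV (\<lambda>t. ramp \<delta> (t + \<delta>))"
    by (intro continuous_on_compose2[OF continuous_on_ramp] continuous_intros) auto
  have lo: "(\<lambda>n. expect n (\<lambda>vs. \<Prod>j\<in>J. ramp \<delta> (scaled_sum n vs j)))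
      \<longlonglongrightarrow> (\<integral>w. (\<Prod>j\<in>J. ramp \<delta> (gauss w j)) \<partial>std_normal_vec K)"
    by (rule expect_prod_tendsto[OF continuous_on_ramp ramp_bounds])
  have hi: "(\<lambda>n. expect n (\<lambda>vs. \<Prod>j\<in>J. ramp \<delta> (scaled_sum n vs j + \<delta>)))
      \<longlonglongrightarrow> (\<integral>w. (\<Prod>j\<in>J. ramp \<delta> (gauss w j + \<delta>)) \<partial>std_normal_vec K)"
    by (rule expect_prod_tendsto[OF ramp_shift_cont ramp_bounds])
  have "\<bar>(\<integral>w. (\<Prod>j\<in>J. ramp \<delta> (gauss w j)) \<partial>std_normal_vec K) - L\<bar> \<le> card J * \<delta>"
    unfolding L_def using \<open>\<delta> > 0\<close>
    by (intro gauss_orthant_approx ramp_bounds borel_measurable_continuous_onI[OF continuous_on_ramp])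
       (auto intro: ramp_nonpos ramp_ge)
  moreover have "\<bar>(\<integral>w. (\<Prod>j\<in>J. ramp \<delta> (gauss w j + \<delta>)) \<partial>std_normal_vec K) - L\<bar> \<le> card J * \<delta>"
    unfolding L_def using \<open>\<delta> > 0\<close>
    by (intro gauss_orthant_approx ramp_bounds borel_measurable_continuous_onI[OF ramp_shift_cont])
       (auto intro: ramp_nonpos ramp_ge)
  moreover have "\<forall>n. expect n (\<lambda>vs. \<Prod>j\<in>J. ramp \<delta> (scaled_sum n vs j)) \<le> expect n (\<lambda>vs. of_bool (\<forall>j\<in>J. 0 < (\<Sum>v\<leftarrow>vs. g j v)))
      \<and> expect n (\<lambda>vs. of_bool (\<forall>j\<in>J. 0 < (\<Sum>v\<leftarrow>vs. g j v))) \<le> expect n (\<lambda>vs. \<Prod>j\<in>J. ramp \<delta> (scaled_sum n vs j + \<delta>))"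
    using \<open>\<delta> > 0\<close> by (auto intro!: expect_mono prod_ramp_le_orthant orthant_le_prod_ramp)
  ultimately show "\<exists>lo hi cl ch. lo \<longlonglongrightarrow> cl \<and> hi \<longlonglongrightarrow> ch
      \<and> (\<forall>n. lo n \<le> expect n (\<lambda>vs. of_bool (\<forall>j\<in>J. 0 < (\<Sum>v\<leftarrow>vs. g j v))) \<and> expect n (\<lambda>vs. of_bool (\<forall>j\<in>J. 0 < (\<Sum>v\<leftarrow>vs. g j v))) \<le> hi n)
      \<and> L - \<epsilon> \<le> cl \<and> ch \<le> L + \<epsilon>"
    using lo hi \<open>card J * \<delta> \<le> \<epsilon>\<close> by (intro exI conjI) (assumption | linarith)+
qed

end

section \<open>Condorcet winners\<close>

lemma rankings_iff: "r \<in> rankings m \<longleftrightarrow> set r = {0..<m} \<and> distinct r"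
  by (simp add: rankings_def permutations_of_set_def)

lemma above_asym:
  assumes r: "r \<in> rankings m" and ij: "i < m" "j < m" "i \<noteq> j"
  shows "above r j i \<longleftrightarrow> \<not> above r i j"
proof
  assume "above r j i"
  then obtain a b where ab: "a < b" "b < length r" "r ! a = j" "r ! b = i"
    by (auto simp: above_def)
  show "\<not> above r i j"
  proof
    assume "above r i j"
    then obtain a' b' where ab': "a' < b'" "b' < length r" "r ! a' = i" "r ! b' = j"
      by (auto simp: above_def)
    have "distinct r"
      using r by (simp add: rankings_iff)
    then have "a' = b"
      using ab ab' by (metis nth_eq_iff_index_eq order.strict_trans)
    moreover have "b' = a"
      using ab ab' \<open>distinct r\<close> by (metis nth_eq_iff_index_eq order.strict_trans)
    ultimately show False
      using ab ab' by simp
  qed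
next
  assume not_above: "\<not> above r i j"
  have "i \<in> set r" "j \<in> set r"
    using r ij by (simp_all add: rankings_iff)
  then obtain a b where a: "a < length r" "r ! a = i" and b: "b < length r" "r ! b = j"
    by (metis in_set_conv_nth)
  moreover have "a \<noteq> b"
    using a b ij by auto
  ultimately have "b < a"
    using not_above unfolding above_def by (metis linorder_neqE_nat)
  then show "above r j i"
    using a b unfolding above_def by blast
qed

lemma a_pair_swap:
  assumes "r \<in> rankings m" "i < m" "j < m" "i \<noteq> j"
  shows "a_pair r j i = - a_pair r i j"
  using above_asym[OF assms] by (simp add: a_pair_def)

lemma a_pair_sq [simp]: "(a_pair r i j)\<^sup>2 = 1"
  by (simp add: a_pair_def)

lemma a_triple_eq:
  assumes "r \<in> rankings m" "i < m" "j < m" "l < m" "i \<noteq> j" "i \<noteq> l"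
  shows "a_triple r i j l = a_pair r i j * a_pair r i l"
  using above_asym[OF assms(1,2,3,5)] above_asym[OF assms(1,2,4,6)]
  by (auto simp: a_triple_def a_pair_def)

definition margin :: "nat list list \<Rightarrow> nat \<Rightarrow> nat \<Rightarrow> real" where
  "margin vs i j = (\<Sum>v\<leftarrow>vs. a_pair v i j)"

lemma margin_Ints: "margin vs i j \<in> \<int>"
proof -
  have "a_pair v i j \<in> \<int>" for v
    by (simp add: a_pair_def)
  then show ?thesis
    unfolding margin_def by (induction vs) (simp_all add: Ints_add)
qed

lemma margin_swap:
  assumes "vs \<in> profiles m n" "i < m" "j < m" "i \<noteq> j"
  shows "margin vs j i = - margin vs i j"
proof -
  have "a_pair v j i = - a_pair v i j" if "v \<in> set vs" for v
    using that assms by (intro a_pair_swap[of v m]) (auto simp: profiles_def)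
  then show ?thesis
    unfolding margin_def by (induction vs) auto
qed

lemma sum_count_list_eq_sum_list:
  assumes "finite R" "set vs \<subseteq> R"
  shows "(\<Sum>r\<in>R. f r * real (count_list vs r)) = (\<Sum>v\<leftarrow>vs. f v)"
  using assms(2)
proof (induction vs)
  case (Cons v vs)
  have "(\<Sum>r\<in>R. f r * real (count_list (v # vs) r)) = (\<Sum>r\<in>R. f r * real (count_list vs r)) + (\<Sum>r\<in>R. if v = r then f r else 0)"
    unfolding sum.distrib[symmetric] by (intro sum.cong) (simp_all add: algebra_simps)
  also have "(\<Sum>r\<in>R. if v = r then f r else 0) = f v"
    using Cons.prems assms(1) by simp
  finally show ?case
    using Cons by simp
qed simp

lemma condorcet_winner_iff_margin:
  assumes "vs \<in> profiles m n"
  shows "condorcet_winner m vs i \<longleftrightarrow> (\<forall>j\<in>{0..<m} - {i}. 0 < margin vs i j)"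
proof -
  have "(\<Sum>r\<in>rankings m. a_pair r i j * real (count_list vs r)) = margin vs i j" for j
    using assms unfolding margin_def profiles_def by (intro sum_count_list_eq_sum_list finite_rankings) simp
  moreover have "1 \<le> margin vs i j \<longleftrightarrow> 0 < margin vs i j" for j
    using margin_Ints[of vs i j] by (auto elim!: Ints_cases)
  ultimately show ?thesis
    by (auto simp: condorcet_winner_def)
qed

lemma condorcet_winner_unique:
  assumes "vs \<in> profiles m n" "i < m" "i' < m" "condorcet_winner m vs i" "condorcet_winner m vs i'"
  shows "i = i'"
proof (rule ccontr)
  assume "i \<noteq> i'"
  then have "0 < margin vs i i'" "0 < margin vs i' i"
    using assms by (auto simp: condorcet_winner_iff_margin)
  moreover have "margin vs i' i = - margin vs i i'"
    using margin_swap assms \<open>i \<noteq> i'\<close> by blast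
  ultimately show False
    by simp
qed

lemma prob_event_condorcet_winner_exists:
  "prob_event m p n (\<lambda>vs. \<exists>i<m. condorcet_winner m vs i) = (\<Sum>i<m. prob_event m p n (\<lambda>vs. condorcet_winner m vs i))"
proof -
  have "of_bool (\<exists>i<m. condorcet_winner m vs i) = (\<Sum>i<m. of_bool (condorcet_winner m vs i) :: real)"
    if "vs \<in> profiles m n" for vs
  proof (cases "\<exists>i<m. condorcet_winner m vs i")
    case True
    then obtain i where "i < m" "condorcet_winner m vs i"
      by blast
    then have "(\<Sum>i'<m. of_bool (condorcet_winner m vs i') :: real) = (\<Sum>i'<m. if i' = i then 1 else 0)"
      using condorcet_winner_unique[OF that] by (intro sum.cong) auto
    then show ?thesis
      using True \<open>i < m\<close> by simp
  qed simp
  then have "prob_event m p n (\<lambda>vs. \<exists>i<m. condorcet_winner m vs i)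
      = (\<Sum>vs\<in>profiles m n. profile_prob p vs * (\<Sum>i<m. of_bool (condorcet_winner m vs i)))"
    unfolding prob_event_eq_expectation profile_expectation_def by (intro sum.cong) simp_all
  also have "\<dots> = (\<Sum>i<m. \<Sum>vs\<in>profiles m n. profile_prob p vs * of_bool (condorcet_winner m vs i))"
    by (simp only: sum_distrib_left) (rule sum.swap)
  finally show ?thesis
    by (simp add: prob_event_eq_expectation profile_expectation_def)
qed

lemma prob_event_cong:
  "(\<And>vs. vs \<in> profiles m n \<Longrightarrow> P vs = Q vs) \<Longrightarrow> prob_event m p n P = prob_event m p n Q"
  unfolding prob_event_def by (rule sum.cong) auto

locale condorcet_model = voter_distribution +
  assumes lam_lt1: "\<forall>i<m. \<forall>j<m. i \<noteq> j \<longrightarrow> \<bar>lam m p i j\<bar> < 1"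
begin

lemma lam_eq: "lam m p i j = (\<Sum>r\<in>rankings m. p r * a_pair r i j)"
  by (simp add: lam_def mult.commute)

definition standardized_pair :: "nat \<Rightarrow> nat \<Rightarrow> nat list \<Rightarrow> real" where
  "standardized_pair i j r = (a_pair r i j - lam m p i j) / sqrt (1 - (lam m p i j)\<^sup>2)"

lemma wdot_standardized_pair:
  "wdot (rankings m) p (standardized_pair i j) (standardized_pair i l)
     = ((\<Sum>r\<in>rankings m. p r * (a_pair r i j * a_pair r i l)) - lam m p i j * lam m p i l)
       / (sqrt (1 - (lam m p i j)\<^sup>2) * sqrt (1 - (lam m p i l)\<^sup>2))"
proof -
  define lj ll where "lj = lam m p i j" and "ll = lam m p i l"
  have "wdot (rankings m) p (standardized_pair i j) (standardized_pair i l)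
      = (\<Sum>r\<in>rankings m. (p r * (a_pair r i j * a_pair r i l) - lj * (p r * a_pair r i l)
           - ll * (p r * a_pair r i j) + lj * ll * p r) / (sqrt (1 - lj\<^sup>2) * sqrt (1 - ll\<^sup>2)))"
    unfolding wdot_def standardized_pair_def lj_def[symmetric] ll_def[symmetric]
    by (intro sum.cong refl) (simp add: field_simps)
  also have "\<dots> = ((\<Sum>r\<in>rankings m. p r * (a_pair r i j * a_pair r i l)) - lj * ll)
      / (sqrt (1 - lj\<^sup>2) * sqrt (1 - ll\<^sup>2))"
    by (simp add: sum_divide_distrib[symmetric] sum.distrib sum_subtractf
        flip: sum_distrib_left lam_eq lj_def ll_def) (simp add: p_sum)
  finally show ?thesis
    by (simp add: lj_def ll_def)
qed

lemma corrR_eq_wdot: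
  assumes "i < m" "j \<in> {0..<m} - {i}" "l \<in> {0..<m} - {i}"
  shows "corrR m p i j l = wdot (rankings m) p (standardized_pair i j) (standardized_pair i l)"
proof (cases "j = l")
  case True
  have "\<bar>lam m p i j\<bar> < 1"
    using lam_lt1 assms by auto
  then have "(lam m p i j)\<^sup>2 < 1"
    by (simp add: abs_square_less_1)
  moreover have "(\<Sum>r\<in>rankings m. p r * (a_pair r i j * a_pair r i j)) = 1"
    using p_sum a_pair_sq[of _ i j] by (simp add: power2_eq_square)
  ultimately show ?thesis
    using True by (simp add: corrR_def wdot_standardized_pair power2_eq_square flip: real_sqrt_mult)
next
  case False
  have "(\<Sum>r\<in>rankings m. a_triple r i j l * p r) = (\<Sum>r\<in>rankings m. p r * (a_pair r i j * a_pair r i l))"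
    using assms by (intro sum.cong refl) (simp add: a_triple_eq[of _ m])
  then show ?thesis
    using False by (simp add: corrR_def wdot_standardized_pair real_sqrt_mult)
qed

lemma corrR_factorization:
  assumes "i < m"
  shows "\<exists>A. \<forall>j\<in>{0..<m} - {i}. \<forall>l\<in>{0..<m} - {i}. (\<Sum>k\<in>{0..<m} - {i}. A j k * A l k) = corrR m p i j l"
  using gram_factorization[OF p_nonneg finite_rankings, of "{0..<m} - {i}" "standardized_pair i"]
    corrR_eq_wdot[OF assms] by simp

lemma wrong_sign_tendsto:
  assumes "lam m p i j \<noteq> 0"
  shows "(\<lambda>n. prob_event m p n (\<lambda>vs. (0 < margin vs i j) \<noteq> (0 < lam m p i j))) \<longlonglongrightarrow> 0"
proof (rule tendsto_sandwich[OF _ _ tendsto_const])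
  have "\<bar>lam m p i j\<bar> > 0"
    using assms by simp
  then show "(\<lambda>n. expect n (\<lambda>vs. of_bool (real n * \<bar>lam m p i j\<bar> \<le> \<bar>margin vs i j - real n * lam m p i j\<bar>)) :: real)
      \<longlonglongrightarrow> 0"
    using expect_weak_law[of "\<bar>lam m p i j\<bar>" "\<lambda>r. a_pair r i j"] by (simp add: margin_def lam_eq)
  have "(0 < margin vs i j) \<noteq> (0 < lam m p i j) \<Longrightarrow> real n * \<bar>lam m p i j\<bar> \<le> \<bar>margin vs i j - real n * lam m p i j\<bar>"
    for vs n
    by (cases "0 < lam m p i j") (auto simp: abs_if mult_less_0_iff)
  then show "\<forall>\<^sub>F n in sequentially. prob_event m p n (\<lambda>vs. (0 < margin vs i j) \<noteq> (0 < lam m p i j))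
      \<le> expect n (\<lambda>vs. of_bool (real n * \<bar>lam m p i j\<bar> \<le> \<bar>margin vs i j - real n * lam m p i j\<bar>))"
    unfolding prob_event_eq_expectation by (intro always_eventually allI expect_mono) (simp add: of_bool_def)
  show "\<forall>\<^sub>F n in sequentially. 0 \<le> prob_event m p n (\<lambda>vs. (0 < margin vs i j) \<noteq> (0 < lam m p i j))"
    unfolding prob_event_eq_expectation by (intro always_eventually allI expect_nonneg) simp
qed

lemma condorcet_winner_tendsto_0:
  assumes "j \<in> {0..<m} - {i}" "lam m p i j < 0"
  shows "(\<lambda>n. prob_event m p n (\<lambda>vs. condorcet_winner m vs i)) \<longlonglongrightarrow> 0"
proof (rule tendsto_sandwich[OF _ _ tendsto_const wrong_sign_tendsto])
  show "\<forall>\<^sub>F n in sequentially. 0 \<le> prob_event m p n (\<lambda>vs. condorcet_winner m vs i)"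
    unfolding prob_event_eq_expectation by (intro always_eventually allI expect_nonneg) simp
  have "condorcet_winner m vs i \<Longrightarrow> (0 < margin vs i j) \<noteq> (0 < lam m p i j)" if "vs \<in> profiles m n" for vs n
    using that assms by (simp add: condorcet_winner_iff_margin)
  then show "\<forall>\<^sub>F n in sequentially. prob_event m p n (\<lambda>vs. condorcet_winner m vs i)
      \<le> prob_event m p n (\<lambda>vs. (0 < margin vs i j) \<noteq> (0 < lam m p i j))"
    unfolding prob_event_eq_expectation by (intro always_eventually allI expect_mono) (simp add: of_bool_def)
qed (use assms in simp)

lemma condorcet_winner_approx_null_margins:
  assumes "\<forall>j\<in>{0..<m} - {i}. lam m p i j \<ge> 0"
  defines "J \<equiv> {j \<in> {0..<m} - {i}. lam m p i j = 0}"
  shows "(\<lambda>n. prob_event m p n (\<lambda>vs. condorcet_winner m vs i) - prob_event m p n (\<lambda>vs. \<forall>j\<in>J. 0 < margin vs i j))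
           \<longlonglongrightarrow> 0"
proof (rule Lim_null_comparison)
  define W where "W j vs \<longleftrightarrow> ((0 < margin vs i j) \<noteq> (0 < lam m p i j))" for j vs
  have point: "\<bar>of_bool (\<forall>j\<in>{0..<m} - {i}. 0 < margin vs i j) - of_bool (\<forall>j\<in>J. 0 < margin vs i j)\<bar>
      \<le> (\<Sum>j\<in>{0..<m} - {i} - J. of_bool (W j vs) :: real)" for vs
  proof -
    have "of_bool (\<exists>j\<in>{0..<m} - {i} - J. W j vs) \<le> (\<Sum>j\<in>{0..<m} - {i} - J. of_bool (W j vs) :: real)"
      by (rule of_bool_bex_le_sum) simp
    moreover have "(\<forall>j\<in>{0..<m} - {i}. 0 < margin vs i j) = (\<forall>j\<in>J. 0 < margin vs i j)"
      if right_signs: "\<not> (\<exists>j\<in>{0..<m} - {i} - J. W j vs)"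
    proof
      show "\<forall>j\<in>J. 0 < margin vs i j" if "\<forall>j\<in>{0..<m} - {i}. 0 < margin vs i j"
        using that by (simp add: J_def)
    next
      assume null_positive: "\<forall>j\<in>J. 0 < margin vs i j"
      show "\<forall>j\<in>{0..<m} - {i}. 0 < margin vs i j"
      proof
        fix j
        assume j: "j \<in> {0..<m} - {i}"
        show "0 < margin vs i j"
        proof (cases "j \<in> J")
          case False
          then have "0 < lam m p i j"
            using j assms(1) by (force simp: J_def)
          then show ?thesis
            using right_signs j False by (auto simp: W_def)
        qed (use null_positive in blast)
      qed
    qed
    ultimately show ?thesis
      by (cases "\<exists>j\<in>{0..<m} - {i} - J. W j vs") (auto simp: sum_nonneg)
  qed
  have bound: "\<bar>expect n (\<lambda>vs. of_bool (\<forall>j\<in>{0..<m} - {i}. 0 < margin vs i j) :: real)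
        - expect n (\<lambda>vs. of_bool (\<forall>j\<in>J. 0 < margin vs i j))\<bar>
      \<le> expect n (\<lambda>vs. \<Sum>j\<in>{0..<m} - {i} - J. of_bool (W j vs))" for n
    by (rule expect_abs_diff_le, rule point)
  have event: "prob_event m p n (\<lambda>vs. condorcet_winner m vs i) = prob_event m p n (\<lambda>vs. \<forall>j\<in>{0..<m} - {i}. 0 < margin vs i j)" for n
    by (rule prob_event_cong) (rule condorcet_winner_iff_margin)
  have "norm (prob_event m p n (\<lambda>vs. condorcet_winner m vs i) - prob_event m p n (\<lambda>vs. \<forall>j\<in>J. 0 < margin vs i j))
      \<le> (\<Sum>j\<in>{0..<m} - {i} - J. prob_event m p n (W j))" for n
    unfolding event unfolding prob_event_eq_expectation real_norm_def using bound by (simp only: expect_sum)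
  then show "\<forall>\<^sub>F n in sequentially. norm (prob_event m p n (\<lambda>vs. condorcet_winner m vs i)
      - prob_event m p n (\<lambda>vs. \<forall>j\<in>J. 0 < margin vs i j)) \<le> (\<Sum>j\<in>{0..<m} - {i} - J. prob_event m p n (W j))"
    by simp
  show "(\<lambda>n. \<Sum>j\<in>{0..<m} - {i} - J. prob_event m p n (W j)) \<longlonglongrightarrow> 0"
    unfolding W_def J_def by (intro tendsto_null_sum wrong_sign_tendsto) auto
qed

lemma condorcet_winner_tendsto:
  assumes "i < m"
  shows "(\<lambda>n. prob_event m p n (\<lambda>vs. condorcet_winner m vs i))
           \<longlonglongrightarrow> gauss_orthant ({0..<m} - {i}) (corrR m p i) (delta m p i)"
proof -
  define I where "I = {0..<m} - {i}"
  define A where "A = (SOME A. \<forall>j\<in>I. \<forall>l\<in>I. (\<Sum>k\<in>I. A j k * A l k) = corrR m p i j l)"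
  have A: "\<forall>j\<in>I. \<forall>l\<in>I. (\<Sum>k\<in>I. A j k * A l k) = corrR m p i j l"
    unfolding A_def I_def by (rule someI_ex[OF corrR_factorization[OF assms]])
  define J where "J = {j \<in> I. lam m p i j = 0}"
  have orthant: "gauss_orthant I (corrR m p i) (delta m p i) = measure (std_normal_vec I)
      {w \<in> space (std_normal_vec I). \<forall>j\<in>I. delta m p i j \<le> ereal (\<Sum>k\<in>I. A j k * w k)}"
    unfolding gauss_orthant_def Let_def A_def ..
  show ?thesis
  proof (cases "\<exists>j\<in>I. lam m p i j < 0")
    case True
    then obtain j where "j \<in> I" "lam m p i j < 0"
      by blast
    then have "{w \<in> space (std_normal_vec I). \<forall>j\<in>I. delta m p i j \<le> ereal (\<Sum>k\<in>I. A j k * w k)} = {}"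
      by (auto simp: delta_def)
    then have "gauss_orthant I (corrR m p i) (delta m p i) = 0"
      by (simp only: orthant measure_empty)
    then show ?thesis
      using condorcet_winner_tendsto_0[of j i] \<open>j \<in> I\<close> \<open>lam m p i j < 0\<close> by (simp add: I_def)
  next
    case False
    interpret G: gaussian_limit m p J I "\<lambda>j r. a_pair r i j" A
    proof
      show "finite J" "finite I"
        by (simp_all add: J_def I_def)
      show "(\<Sum>r\<in>rankings m. p r * a_pair r i j) = 0" if "j \<in> J" for j
        using that by (simp add: J_def flip: lam_eq)
      show "(\<Sum>r\<in>rankings m. p r * (a_pair r i j)\<^sup>2) = 1" for j
        by (simp add: p_sum)
      show "(\<Sum>k\<in>I. A j k * A l k) = (\<Sum>r\<in>rankings m. p r * a_pair r i j * a_pair r i l)" if "j \<in> J" "l \<in> J" for j l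
        using that A corrR_eq_wdot[OF assms, of j l]
        by (simp add: J_def I_def wdot_standardized_pair mult.assoc)
    qed
    have "{w \<in> space (std_normal_vec I). \<forall>j\<in>I. delta m p i j \<le> ereal (\<Sum>k\<in>I. A j k * w k)}
        = {w \<in> space (std_normal_vec I). \<forall>j\<in>J. 0 \<le> G.gauss w j}"
      using False by (auto simp: delta_def J_def G.gauss_def not_less)
    then have limit: "gauss_orthant I (corrR m p i) (delta m p i)
        = measure (std_normal_vec I) {w \<in> space (std_normal_vec I). \<forall>j\<in>J. 0 \<le> G.gauss w j}"
      by (simp only: orthant)
    have "(\<lambda>n. prob_event m p n (\<lambda>vs. \<forall>j\<in>J. 0 < margin vs i j))
        \<longlonglongrightarrow> gauss_orthant I (corrR m p i) (delta m p i)"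
      unfolding limit prob_event_eq_expectation margin_def by (rule G.orthant_tendsto)
    moreover have "(\<lambda>n. prob_event m p n (\<lambda>vs. condorcet_winner m vs i) - prob_event m p n (\<lambda>vs. \<forall>j\<in>J. 0 < margin vs i j))
        \<longlonglongrightarrow> 0"
      using False unfolding J_def I_def by (intro condorcet_winner_approx_null_margins) (simp add: not_less)
    ultimately show ?thesis
      unfolding I_def by (rule Lim_transform)
  qed
qed

end

theorem mainTheorem2:
  fixes m :: nat and p :: "nat list \<Rightarrow> real"
  assumes m2: "m \<ge> 2"
    and p_nonneg: "\<forall>r\<in>rankings m. p r \<ge> 0"
    and p_sum: "(\<Sum>r\<in>rankings m. p r) = 1"
    and lam_lt1: "\<forall>i<m. \<forall>j<m. i \<noteq> j \<longrightarrow> \<bar>lam m p i j\<bar> < 1"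
  shows "(\<forall>i<m. (\<lambda>n. prob_event m p n (\<lambda>vs. condorcet_winner m vs i))
            \<longlonglongrightarrow> gauss_orthant ({0..<m} - {i}) (corrR m p i) (delta m p i)) \<and>
         (\<lambda>n. prob_event m p n (\<lambda>vs. \<exists>i<m. condorcet_winner m vs i))
            \<longlonglongrightarrow> (\<Sum>i<m. gauss_orthant ({0..<m} - {i}) (corrR m p i) (delta m p i))"
proof -
  interpret condorcet_model m p
    using p_nonneg p_sum lam_lt1 by unfold_locales
  have "\<forall>i<m. (\<lambda>n. prob_event m p n (\<lambda>vs. condorcet_winner m vs i))
      \<longlonglongrightarrow> gauss_orthant ({0..<m} - {i}) (corrR m p i) (delta m p i)"
    using condorcet_winner_tendsto by blast
  moreover from this have "(\<lambda>n. \<Sum>i<m. prob_event m p n (\<lambda>vs. condorcet_winner m vs i))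
      \<longlonglongrightarrow> (\<Sum>i<m. gauss_orthant ({0..<m} - {i}) (corrR m p i) (delta m p i))"
    by (intro tendsto_sum) auto
  ultimately show ?thesis
    by (simp add: prob_event_condorcet_winner_exists)
qed

end
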